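(* Let $\mathcal{X}$ be a measurable space, $\mathcal{Y}$ a finite set, and $W:\mathcal{X}\to\mathcal{Y}$ a channel. Then for any $\lambda_1,\lambda_2>0$ with $\lambda_1+\lambda_2<1$, \[ \frac14\,\overline{d}_M\!\left(\sqrt{\widetilde{\mathcal{X}}}\right)\;\le\;\dot{C}^{\mathrm{opt}}_{\mathrm{DI}}(W)\;\le\;\limsup_{n\to\infty}\frac{1}{n\log n}\log N_{\mathrm{DI}}(n,\lambda_1,\lambda_2)\;\le\;\frac12\,\overline{d}_M\!\left(\sqrt{\widetilde{\mathcal{X}}}\right). \]
   Context: A channel $W:\mathcal{X}\to\mathcal{Y}$ is a measurable map $x\mapsto W_x\in\mathcal{P}(\mathcal{Y})$, where $\mathcal{P}(\mathcal{Y})$ is the set of probability distributions on $\mathcal{Y}$ (viewed as vectors in $\mathbb{R}^{\mathcal{Y}}$). For $x^n=x_1\dots x_n\in\mathcal{X}^n$, $W_{x^n}(y^n)=\prod_{i=1}^n W_{x_i}(y_i)$. An $(n,N,\lambda_1,\lambda_2)$-deterministic identification (DI) code is a family $\{(u_j,\mathcal{E}_j):j\in[N]\}$ with $u_j\in\mathcal{X}^n$, $\mathcal{E}_j\subset\mathcal{Y}^n$, such that $W_{u_j}(\mathcal{E}_j)\ge 1-\lambda_1$ for all $j$ and $W_{u_j}(\mathcal{E}_k)\le\lambda_2$ for all $j\ne k$. $N_{\mathrm{DI}}(n,\lambda_1,\lambda_2)$ is the largest such $N$. Logarithms are base 2. The optimistic DI capacity is $\dot{C}^{\mathrm{opt}}_{\mathrm{DI}}(W)=\inf_{\lambda_1,\lambda_2>0}\limsup_{n\to\infty}\frac{1}{n\log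 n}\log N_{\mathrm{DI}}(n,\lambda_1,\lambda_2)$. Let $\sqrt{\widetilde{\mathcal{X}}}=\{(\sqrt{W_x(y)})_{y\in\mathcal{Y}}:x\in\mathcal{X}\}\subset\mathbb{R}^{\mathcal{Y}}$ with the Euclidean metric. For a nonempty bounded set $F$ in a Euclidean space, $\Gamma_\delta(F)$ is the minimum number of closed balls of radius $\delta$ centered at points of $F$ whose union contains $F$, and the upper Minkowski dimension is $\overline{d}_M(F)=\limsup_{\delta\to0}\frac{\log\Gamma_\delta(F)}{-\log\delta}$. *)

theory Defs
  imports "HOL-Analysis.Analysis" "HOL-Library.Extended_Nat"
begin

definition channel :: "'a measure \<Rightarrow> ('a \<Rightarrow> 'b::finite \<Rightarrow> real) \<Rightarrow> bool" where
  "channel M W \<longleftrightarrow>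
     (\<forall>x\<in>space M. (\<forall>y. 0 \<le> W x y) \<and> (\<Sum>y\<in>UNIV. W x y) = 1) \<and>
     (\<forall>y. (\<lambda>x. W x y) \<in> borel_measurable M)"

definition Wseq :: "('a \<Rightarrow> 'b \<Rightarrow> real) \<Rightarrow> 'a list \<Rightarrow> 'b list \<Rightarrow> real" where
  "Wseq W xs ys = (\<Prod>i<length xs. W (xs ! i) (ys ! i))"

definition Wset :: "('a \<Rightarrow> 'b \<Rightarrow> real) \<Rightarrow> 'a list \<Rightarrow> 'b list set \<Rightarrow> real" where
  "Wset W xs E = (\<Sum>ys\<in>E. Wseq W xs ys)"

definition DI_code :: "'a measure \<Rightarrow> ('a \<Rightarrow> 'b::finite \<Rightarrow> real) \<Rightarrow> nat \<Rightarrow> nat \<Rightarrow> real \<Rightarrow> real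
     \<Rightarrow> (nat \<Rightarrow> 'a list) \<Rightarrow> (nat \<Rightarrow> 'b list set) \<Rightarrow> bool" where
  "DI_code M W n N l1 l2 u E \<longleftrightarrow>
     (\<forall>j<N. length (u j) = n \<and> set (u j) \<subseteq> space M \<and> E j \<subseteq> {ys. length ys = n} \<and>
            Wset W (u j) (E j) \<ge> 1 - l1) \<and>
     (\<forall>j<N. \<forall>k<N. j \<noteq> k \<longrightarrow> Wset W (u j) (E k) \<le> l2)"

definition N_DI :: "'a measure \<Rightarrow> ('a \<Rightarrow> 'b::finite \<Rightarrow> real) \<Rightarrow> nat \<Rightarrow> real \<Rightarrow> real \<Rightarrow> enat" where
  "N_DI M W n l1 l2 = Sup {enat N | N. \<exists>u E. DI_code M W n N l1 l2 u E}"

definition DI_rate :: "'a measure \<Rightarrow> ('a \<Rightarrow> 'b::finite \<Rightarrow> real) \<Rightarrow> nat \<Rightarrow> real \<Rightarrow> real \<Rightarrow> ereal" where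
  "DI_rate M W n l1 l2 =
     (case N_DI M W n l1 l2 of
        enat N \<Rightarrow> ereal (log 2 (real N) / (real n * log 2 (real n)))
      | \<infinity> \<Rightarrow> \<infinity>)"

definition C_opt_DI :: "'a measure \<Rightarrow> ('a \<Rightarrow> 'b::finite \<Rightarrow> real) \<Rightarrow> ereal" where
  "C_opt_DI M W = (INF l1\<in>{0<..}. INF l2\<in>{0<..}. limsup (\<lambda>n. DI_rate M W n l1 l2))"

definition sqrt_tilde :: "'a measure \<Rightarrow> ('a \<Rightarrow> 'b::finite \<Rightarrow> real) \<Rightarrow> (real^'b) set" where
  "sqrt_tilde M W = (\<lambda>x. \<chi> y. sqrt (W x y)) ` space M"

definition covering_number :: "'c::metric_space set \<Rightarrow> real \<Rightarrow> nat" where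
  "covering_number F \<delta> =
     Inf {card C | C. finite C \<and> C \<subseteq> F \<and> F \<subseteq> (\<Union>c\<in>C. cball c \<delta>)}"

definition upper_minkowski_dim :: "'c::metric_space set \<Rightarrow> ereal" where
  "upper_minkowski_dim F =
     Limsup (at_right 0) (\<lambda>\<delta>. ereal (log 2 (real (covering_number F \<delta>)) / (- log 2 \<delta>)))"

end

theory Submission
  imports Defs "HOL-Real_Asymp.Real_Asymp"
begin

text \<open>
  The square-root embedding \<open>x \<mapsto> (sqrt (W x y))\<^sub>y\<close> places the output distributions on the unit
  sphere, where \<open>1 - d(x, x')\<^sup>2 / 2\<close> is the Bhattacharyya coefficient; on product distributions this
  coefficient is multiplicative over letters.

  Converse: if all letters of two codewords were \<open>2\<delta>\<close>-close, the Bhattacharyya coefficient of the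
  output distributions would be at least \<open>1 - 2n\<delta>\<^sup>2\<close> and their total variation at most \<open>4\<delta>\<surd>n\<close>,
  too small for a DI code when \<open>\<delta> = c/\<surd>n\<close>. Rounding each letter to a \<open>\<delta>\<close>-net is therefore
  injective on a code, so \<open>N \<le> \<Gamma>\<^sub>\<delta>\<^sup>n\<close> and the rate is at most \<open>log \<Gamma>\<^sub>c\<^sub>/\<^sub>\<surd>\<^sub>n / log n\<close>,
  asymptotically half the Minkowski dimension.

  Achievability: take a maximal \<open>\<delta>\<close>-separated set \<open>A\<close> of inputs (so \<open>card A \<ge> \<Gamma>\<^sub>\<delta>\<close>), a
  Gilbert-Varshamov code in \<open>A\<^sup>n\<close> of minimum Hamming distance \<open>k = n/q\<close>, and let codeword \<open>u\<close> accept
  when the log-likelihood of \<open>u\<close>, truncated below at \<open>e \<approx> \<delta>\<^sup>4\<close>, is not much below its mean.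
  Separation makes the mean drop by \<open>\<delta>\<^sup>2/2\<close> per differing letter when another codeword is sent;
  keeping only the codewords whose own means share a bin of width \<open>k\<delta>\<^sup>2/8\<close>, Chebyshev's inequality
  bounds both error probabilities by \<open>64 n log\<^sup>2 e / (k\<delta>\<^sup>2)\<^sup>2\<close>. With \<open>k \<approx> \<delta>\<^sup>-\<^sup>4 log\<^sup>2(1/\<delta>)\<close> the rate
  is about \<open>(1 - 1/q) log (card A) / (4 log (1/\<delta>))\<close>, which gives a quarter of the dimension as
  \<open>q \<rightarrow> \<infinity>\<close>.
\<close>

section \<open>Product distributions\<close>

definition prob_vec :: "('a \<Rightarrow> 'b::finite \<Rightarrow> real) \<Rightarrow> 'a \<Rightarrow> bool" where
  "prob_vec W x \<longleftrightarrow> (\<forall>y. 0 \<le> W x y) \<and> (\<Sum>y\<in>UNIV. W x y) = 1"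

lemma channel_prob_vec: "channel M W \<Longrightarrow> x \<in> space M \<Longrightarrow> prob_vec W x"
  unfolding channel_def prob_vec_def by auto

lemma prob_vec_le_1:
  assumes "prob_vec W x"
  shows "W x y \<le> 1"
proof -
  have "W x y \<le> (\<Sum>y'\<in>UNIV. W x y')"
    using assms unfolding prob_vec_def by (intro member_le_sum) auto
  then show ?thesis
    using assms unfolding prob_vec_def by simp
qed

lemma prob_vec_expectation_bounds:
  assumes "prob_vec W x" and "\<And>y. a \<le> f y \<and> f y \<le> b"
  shows "a \<le> (\<Sum>y\<in>UNIV. W x y * f y) \<and> (\<Sum>y\<in>UNIV. W x y * f y) \<le> b"
proof -
  have W: "0 \<le> W x y" "(\<Sum>y\<in>UNIV. W x y) = 1" for y
    using assms(1) unfolding prob_vec_def by auto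
  have "(\<Sum>y\<in>UNIV. W x y * a) \<le> (\<Sum>y\<in>UNIV. W x y * f y)"
    "(\<Sum>y\<in>UNIV. W x y * f y) \<le> (\<Sum>y\<in>UNIV. W x y * b)"
    using assms(2) W(1) by (auto intro!: sum_mono mult_left_mono)
  moreover have "(\<Sum>y\<in>UNIV. W x y * c) = c" for c
    using W(2) by (simp flip: sum_distrib_right)
  ultimately show ?thesis
    by simp
qed

definition words :: "'a set \<Rightarrow> nat \<Rightarrow> 'a list set" where
  "words A n = {xs. set xs \<subseteq> A \<and> length xs = n}"

lemma finite_words: "finite A \<Longrightarrow> finite (words A n)"
  unfolding words_def by (rule finite_lists_length_eq)

lemma card_words: "finite A \<Longrightarrow> card (words A n) = card A ^ n"
  unfolding words_def by (rule card_lists_length_eq)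

lemma sum_words_Suc:
  "(\<Sum>xs\<in>words A (Suc n). f xs) = (\<Sum>a\<in>A. \<Sum>xs\<in>words A n. f (a # xs))"
proof -
  have eq: "words A (Suc n) = (\<lambda>(a, xs). a # xs) ` (A \<times> words A n)"
    unfolding words_def by (auto simp: image_iff length_Suc_conv)
  have inj: "inj_on (\<lambda>(a, xs). a # xs) (A \<times> words A n)"
    by (auto simp: inj_on_def)
  show ?thesis
    unfolding eq by (subst sum.reindex[OF inj]) (simp add: sum.cartesian_product case_prod_beta)
qed

lemma sum_lists_length_Suc:
  "(\<Sum>ys | length ys = Suc n. f ys) = (\<Sum>y\<in>UNIV. \<Sum>ys | length ys = n. f (y # ys))"
  using sum_words_Suc[where A = UNIV] by (simp add: words_def)

lemma Wseq_Nil: "Wseq W [] ys = 1"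
  unfolding Wseq_def by simp

lemma Wseq_Cons: "Wseq W (x # xs) (y # ys) = W x y * Wseq W xs ys"
  unfolding Wseq_def by (simp del: prod.lessThan_Suc add: prod.lessThan_Suc_shift)

lemma Wseq_nonneg: "\<forall>x\<in>set xs. prob_vec W x \<Longrightarrow> 0 \<le> Wseq W xs ys"
  unfolding Wseq_def prob_vec_def by (auto intro!: prod_nonneg)

lemma sum_Wseq:
  fixes W :: "'a \<Rightarrow> 'b::finite \<Rightarrow> real"
  assumes "\<forall>x\<in>set xs. prob_vec W x"
  shows "(\<Sum>ys | length ys = length xs. Wseq W xs ys) = 1"
  using assms
proof (induction xs)
  case Nil
  then show ?case by (simp add: Wseq_Nil)
next
  case (Cons x xs)
  have "(\<Sum>ys | length ys = length (x # xs). Wseq W (x # xs) ys)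
      = (\<Sum>y\<in>UNIV. W x y * (\<Sum>ys | length ys = length xs. Wseq W xs ys))"
    by (simp add: sum_lists_length_Suc Wseq_Cons sum_distrib_left)
  also have "\<dots> = 1"
    using Cons by (simp add: prob_vec_def)
  finally show ?case .
qed

lemma Wset_all_words:
  fixes W :: "'a \<Rightarrow> 'b::finite \<Rightarrow> real"
  assumes "\<forall>x\<in>set xs. prob_vec W x"
  shows "Wset W xs {ys. length ys = length xs} = 1"
  unfolding Wset_def by (rule sum_Wseq[OF assms])

lemma sum_Wseq_additive:
  fixes W :: "'a \<Rightarrow> 'b::finite \<Rightarrow> real"
  assumes "\<forall>x\<in>set xs. prob_vec W x"
  shows "(\<Sum>ys | length ys = length xs. Wseq W xs ys * (\<Sum>i<length xs. h i (ys ! i)))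
     = (\<Sum>i<length xs. \<Sum>y\<in>UNIV. W (xs ! i) y * h i y)"
  using assms
proof (induction xs arbitrary: h)
  case Nil
  then show ?case by simp
next
  case (Cons x xs)
  let ?L = "{ys::'b list. length ys = length xs}"
  have tot: "(\<Sum>ys\<in>?L. Wseq W xs ys) = 1"
    using Cons.prems sum_Wseq by auto
  have IH: "(\<Sum>ys\<in>?L. Wseq W xs ys * (\<Sum>i<length xs. h (Suc i) (ys ! i)))
     = (\<Sum>i<length xs. \<Sum>y\<in>UNIV. W (xs ! i) y * h (Suc i) y)"
    using Cons by auto
  have "(\<Sum>ys | length ys = length (x # xs). Wseq W (x # xs) ys * (\<Sum>i<length (x # xs). h i (ys ! i)))
      = (\<Sum>y\<in>UNIV. \<Sum>ys\<in>?L. W x y * Wseq W xs ys * (h 0 y + (\<Sum>i<length xs. h (Suc i) (ys ! i))))"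
    by (simp del: sum.lessThan_Suc add: sum_lists_length_Suc Wseq_Cons sum.lessThan_Suc_shift)
  also have "\<dots> = (\<Sum>y\<in>UNIV. W x y * h 0 y * (\<Sum>ys\<in>?L. Wseq W xs ys)
      + W x y * (\<Sum>ys\<in>?L. Wseq W xs ys * (\<Sum>i<length xs. h (Suc i) (ys ! i))))"
    by (simp add: algebra_simps sum.distrib sum_distrib_left)
  also have "\<dots> = (\<Sum>y\<in>UNIV. W x y * h 0 y)
      + (\<Sum>y\<in>UNIV. W x y) * (\<Sum>i<length xs. \<Sum>y\<in>UNIV. W (xs ! i) y * h (Suc i) y)"
    by (simp add: tot IH sum.distrib sum_distrib_right)
  also have "\<dots> = (\<Sum>i<length (x # xs). \<Sum>y\<in>UNIV. W ((x # xs) ! i) y * h i y)"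
    using Cons.prems by (simp del: sum.lessThan_Suc add: prob_vec_def sum.lessThan_Suc_shift)
  finally show ?case .
qed

lemma sum_Wseq_additive_centred_square:
  fixes W :: "'a \<Rightarrow> 'b::finite \<Rightarrow> real"
  assumes "\<forall>x\<in>set xs. prob_vec W x"
    and "\<forall>i<length xs. (\<Sum>y\<in>UNIV. W (xs ! i) y * k i y) = 0"
  shows "(\<Sum>ys | length ys = length xs. Wseq W xs ys * (\<Sum>i<length xs. k i (ys ! i))\<^sup>2)
     = (\<Sum>i<length xs. \<Sum>y\<in>UNIV. W (xs ! i) y * (k i y)\<^sup>2)"
  using assms
proof (induction xs arbitrary: k)
  case Nil
  then show ?case by simp
next
  case (Cons x xs)
  let ?L = "{ys::'b list. length ys = length xs}"
  let ?S = "\<lambda>ys. \<Sum>i<length xs. k (Suc i) (ys ! i)"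
  have centred: "\<forall>i<length xs. (\<Sum>y\<in>UNIV. W (xs ! i) y * k (Suc i) y) = 0"
    using Cons.prems(2) by auto
  have tot: "(\<Sum>ys\<in>?L. Wseq W xs ys) = 1"
    using Cons.prems sum_Wseq by auto
  have mean: "(\<Sum>ys\<in>?L. Wseq W xs ys * ?S ys) = 0"
    using sum_Wseq_additive[of xs W "\<lambda>i. k (Suc i)"] centred Cons.prems by auto
  have IH: "(\<Sum>ys\<in>?L. Wseq W xs ys * (?S ys)\<^sup>2)
     = (\<Sum>i<length xs. \<Sum>y\<in>UNIV. W (xs ! i) y * (k (Suc i) y)\<^sup>2)"
    using Cons.IH[of "\<lambda>i. k (Suc i)"] centred Cons.prems by auto
  have "(\<Sum>ys | length ys = length (x # xs). Wseq W (x # xs) ys * (\<Sum>i<length (x # xs). k i (ys ! i))\<^sup>2)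
      = (\<Sum>y\<in>UNIV. \<Sum>ys\<in>?L. W x y * Wseq W xs ys * (k 0 y + ?S ys)\<^sup>2)"
    by (simp del: sum.lessThan_Suc add: sum_lists_length_Suc Wseq_Cons sum.lessThan_Suc_shift)
  also have "\<dots> = (\<Sum>y\<in>UNIV. W x y * (k 0 y)\<^sup>2 * (\<Sum>ys\<in>?L. Wseq W xs ys)
      + 2 * W x y * k 0 y * (\<Sum>ys\<in>?L. Wseq W xs ys * ?S ys)
      + W x y * (\<Sum>ys\<in>?L. Wseq W xs ys * (?S ys)\<^sup>2))"
    by (simp add: power2_eq_square algebra_simps sum.distrib sum_distrib_left)
  also have "\<dots> = (\<Sum>y\<in>UNIV. W x y * (k 0 y)\<^sup>2)
      + (\<Sum>y\<in>UNIV. W x y) * (\<Sum>i<length xs. \<Sum>y\<in>UNIV. W (xs ! i) y * (k (Suc i) y)\<^sup>2)"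
    by (simp add: tot IH mean sum.distrib sum_distrib_right)
  also have "\<dots> = (\<Sum>i<length (x # xs). \<Sum>y\<in>UNIV. W ((x # xs) ! i) y * (k i y)\<^sup>2)"
    using Cons.prems by (simp del: sum.lessThan_Suc add: prob_vec_def sum.lessThan_Suc_shift)
  finally show ?case .
qed

lemma sum_Wseq_additive_variance_le:
  fixes W :: "'a \<Rightarrow> 'b::finite \<Rightarrow> real"
    and B :: real
  assumes xs: "\<forall>x\<in>set xs. prob_vec W x" and h: "\<And>i y. i < length xs \<Longrightarrow> - B \<le> h i y \<and> h i y \<le> 0"
  shows "(\<Sum>ys | length ys = length xs. Wseq W xs ys *
           ((\<Sum>i<length xs. h i (ys ! i)) - (\<Sum>i<length xs. \<Sum>y\<in>UNIV. W (xs ! i) y * h i y))\<^sup>2)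
         \<le> length xs * B\<^sup>2"
proof -
  let ?n = "length xs"
  define m where "m i = (\<Sum>y\<in>UNIV. W (xs ! i) y * h i y)" for i
  have pv: "prob_vec W (xs ! i)" if "i < ?n" for i
    using xs that by auto
  have m: "- B \<le> m i \<and> m i \<le> 0" if "i < ?n" for i
    unfolding m_def using prob_vec_expectation_bounds[OF pv[OF that], of "- B" "h i" 0] h[OF that] by simp
  have centred: "\<forall>i<?n. (\<Sum>y\<in>UNIV. W (xs ! i) y * (h i y - m i)) = 0"
  proof (intro allI impI)
    fix i
    assume i: "i < ?n"
    have "(\<Sum>y\<in>UNIV. W (xs ! i) y * (h i y - m i)) = m i - (\<Sum>y\<in>UNIV. W (xs ! i) y) * m i"
      unfolding m_def by (simp add: right_diff_distrib sum_subtractf sum_distrib_right)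
    then show "(\<Sum>y\<in>UNIV. W (xs ! i) y * (h i y - m i)) = 0"
      using pv[OF i] unfolding prob_vec_def by simp
  qed
  have "(\<Sum>ys | length ys = ?n. Wseq W xs ys * ((\<Sum>i<?n. h i (ys ! i)) - (\<Sum>i<?n. m i))\<^sup>2)
      = (\<Sum>ys | length ys = ?n. Wseq W xs ys * (\<Sum>i<?n. h i (ys ! i) - m i)\<^sup>2)"
    by (simp add: sum_subtractf)
  also have "\<dots> = (\<Sum>i<?n. \<Sum>y\<in>UNIV. W (xs ! i) y * (h i y - m i)\<^sup>2)"
    by (rule sum_Wseq_additive_centred_square[OF xs centred])
  also have "\<dots> \<le> (\<Sum>i<?n. B\<^sup>2)"
  proof (rule sum_mono)
    fix i
    assume "i \<in> {..<?n}"
    then have i: "i < ?n"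
      by simp
    have "\<bar>h i y - m i\<bar> \<le> \<bar>B\<bar>" for y
      using h[OF i, of y] m[OF i] by linarith
    then have "0 \<le> (h i y - m i)\<^sup>2 \<and> (h i y - m i)\<^sup>2 \<le> B\<^sup>2" for y
      by (simp only: abs_le_square_iff zero_le_power2 simp_thms)
    then show "(\<Sum>y\<in>UNIV. W (xs ! i) y * (h i y - m i)\<^sup>2) \<le> B\<^sup>2"
      using prob_vec_expectation_bounds[OF pv[OF i], of 0 "\<lambda>y. (h i y - m i)\<^sup>2" "B\<^sup>2"] by simp
  qed
  finally show ?thesis
    unfolding m_def by simp
qed

lemma Wset_le_chebyshev:
  fixes W :: "'a \<Rightarrow> 'b::finite \<Rightarrow> real"
  assumes xs: "\<forall>x\<in>set xs. prob_vec W x" and S: "S \<subseteq> {ys. length ys = length xs}" and "0 < t"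
    and far: "\<And>ys. ys \<in> S \<Longrightarrow> t \<le> \<bar>G ys - m\<bar>"
  shows "Wset W xs S \<le> (\<Sum>ys | length ys = length xs. Wseq W xs ys * (G ys - m)\<^sup>2) / t\<^sup>2"
proof -
  have "Wset W xs S \<le> (\<Sum>ys\<in>S. Wseq W xs ys * (G ys - m)\<^sup>2 / t\<^sup>2)"
    unfolding Wset_def
  proof (rule sum_mono)
    fix ys
    assume "ys \<in> S"
    then have "t\<^sup>2 \<le> (G ys - m)\<^sup>2"
      using far \<open>0 < t\<close> by (metis abs_le_square_iff abs_of_pos)
    then have "1 \<le> (G ys - m)\<^sup>2 / t\<^sup>2"
      using \<open>0 < t\<close> by simp
    then show "Wseq W xs ys \<le> Wseq W xs ys * (G ys - m)\<^sup>2 / t\<^sup>2"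
      using Wseq_nonneg[OF xs, of ys] by (metis mult_left_mono mult.right_neutral times_divide_eq_right)
  qed
  also have "\<dots> \<le> (\<Sum>ys | length ys = length xs. Wseq W xs ys * (G ys - m)\<^sup>2 / t\<^sup>2)"
    using S Wseq_nonneg[OF xs] by (intro sum_mono2 finite_list_length) auto
  also have "\<dots> = (\<Sum>ys | length ys = length xs. Wseq W xs ys * (G ys - m)\<^sup>2) / t\<^sup>2"
    by (simp add: sum_divide_distrib)
  finally show ?thesis .
qed

lemma sum_sqrt_Wseq_mult:
  fixes W :: "'a \<Rightarrow> 'b::finite \<Rightarrow> real"
  assumes "length xs' = length xs"
  shows "(\<Sum>ys | length ys = length xs. sqrt (Wseq W xs ys * Wseq W xs' ys))
     = (\<Prod>i<length xs. \<Sum>y\<in>UNIV. sqrt (W (xs ! i) y * W (xs' ! i) y))"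
  using assms
proof (induction xs arbitrary: xs')
  case Nil
  then show ?case by (simp add: Wseq_Nil)
next
  case (Cons x xs)
  then obtain x' xs'' where xs': "xs' = x' # xs''"
    by (cases xs') auto
  let ?L = "{ys::'b list. length ys = length xs}"
  have IH: "(\<Sum>ys\<in>?L. sqrt (Wseq W xs ys * Wseq W xs'' ys))
      = (\<Prod>i<length xs. \<Sum>y\<in>UNIV. sqrt (W (xs ! i) y * W (xs'' ! i) y))"
    using Cons xs' by auto
  have "(\<Sum>ys | length ys = length (x # xs). sqrt (Wseq W (x # xs) ys * Wseq W xs' ys))
     = (\<Sum>y\<in>UNIV. \<Sum>ys\<in>?L. sqrt (W x y * W x' y) * sqrt (Wseq W xs ys * Wseq W xs'' ys))"
    by (simp add: sum_lists_length_Suc Wseq_Cons xs' real_sqrt_mult[symmetric] algebra_simps)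
  also have "\<dots> = (\<Sum>y\<in>UNIV. sqrt (W x y * W x' y)) * (\<Sum>ys\<in>?L. sqrt (Wseq W xs ys * Wseq W xs'' ys))"
    by (simp add: sum_distrib_left sum_distrib_right sum.swap[of _ UNIV])
  also have "\<dots> = (\<Prod>i<length (x # xs). \<Sum>y\<in>UNIV. sqrt (W ((x # xs) ! i) y * W (xs' ! i) y))"
    by (simp del: prod.lessThan_Suc add: IH prod.lessThan_Suc_shift xs')
  finally show ?case .
qed

section \<open>The square-root embedding and covering numbers\<close>

definition sqrt_vec :: "('a \<Rightarrow> 'b::finite \<Rightarrow> real) \<Rightarrow> 'a \<Rightarrow> real^'b" where
  "sqrt_vec W x = (\<chi> y. sqrt (W x y))"

definition bhattacharyya :: "('a \<Rightarrow> 'b::finite \<Rightarrow> real) \<Rightarrow> 'a \<Rightarrow> 'a \<Rightarrow> real" where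
  "bhattacharyya W a b = (\<Sum>y\<in>UNIV. sqrt (W a y * W b y))"

lemma sqrt_tilde_eq_image: "sqrt_tilde M W = sqrt_vec W ` space M"
  unfolding sqrt_tilde_def sqrt_vec_def by simp

lemma dist_sqrt_vec_squared:
  assumes "prob_vec W a" "prob_vec W b"
  shows "(dist (sqrt_vec W a) (sqrt_vec W b))\<^sup>2 = 2 - 2 * bhattacharyya W a b"
proof -
  have "(dist (sqrt_vec W a) (sqrt_vec W b))\<^sup>2 = (\<Sum>y\<in>UNIV. (sqrt (W a y) - sqrt (W b y))\<^sup>2)"
    unfolding dist_vec_def L2_set_def sqrt_vec_def by (simp add: dist_real_def sum_nonneg)
  also have "\<dots> = (\<Sum>y\<in>UNIV. W a y + W b y - 2 * sqrt (W a y * W b y))"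
    using assms unfolding prob_vec_def by (intro sum.cong) (auto simp: power2_diff real_sqrt_mult)
  also have "\<dots> = 2 - 2 * bhattacharyya W a b"
    using assms unfolding prob_vec_def bhattacharyya_def
    by (simp add: sum.distrib sum_subtractf sum_distrib_left)
  finally show ?thesis .
qed

lemma bhattacharyya_nonneg: "prob_vec W a \<Longrightarrow> prob_vec W b \<Longrightarrow> 0 \<le> bhattacharyya W a b"
  unfolding bhattacharyya_def prob_vec_def by (simp add: sum_nonneg)

lemma norm_sqrt_vec: "prob_vec W a \<Longrightarrow> norm (sqrt_vec W a) = 1"
  unfolding norm_vec_def L2_set_def sqrt_vec_def prob_vec_def by simp

lemma bounded_sqrt_tilde: "channel M W \<Longrightarrow> bounded (sqrt_tilde M W)"
  by (rule bounded_subset[OF bounded_cball[of 0 1]])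
    (auto simp: sqrt_tilde_eq_image norm_sqrt_vec channel_prob_vec)

lemma finite_cover_exists:
  fixes F :: "'c::heine_borel set"
  assumes "bounded F" "0 < d"
  obtains C where "finite C" "C \<subseteq> F" "F \<subseteq> (\<Union>c\<in>C. cball c d)"
proof -
  have "Met_TC.mtotally_bounded F"
    using assms(1) by (intro Met_TC.compact_closure_of_imp_mtotally_bounded) (simp_all add: compact_closure)
  then have "\<exists>C. finite C \<and> C \<subseteq> F \<and> F \<subseteq> (\<Union>c\<in>C. ball c d)"
    using assms(2) unfolding Met_TC.mtotally_bounded_def by simp
  then obtain C where "finite C" "C \<subseteq> F" "F \<subseteq> (\<Union>c\<in>C. ball c d)"
    by auto
  moreover have "(\<Union>c\<in>C. ball c d) \<subseteq> (\<Union>c\<in>C. cball c d)"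
    by (intro UN_mono) auto
  ultimately show ?thesis
    using that by (meson order_trans)
qed

lemma covering_number_le_card:
  assumes "finite C" "C \<subseteq> F" "F \<subseteq> (\<Union>c\<in>C. cball c d)"
  shows "covering_number F d \<le> card C"
  unfolding covering_number_def Inf_nat_def by (rule Least_le) (use assms in blast)

lemma covering_number_attained:
  fixes F :: "'c::heine_borel set"
  assumes "bounded F" "0 < d"
  obtains C where "finite C" "C \<subseteq> F" "F \<subseteq> (\<Union>c\<in>C. cball c d)" "card C = covering_number F d"
proof -
  let ?K = "{card C | C. finite C \<and> C \<subseteq> F \<and> F \<subseteq> (\<Union>c\<in>C. cball c d)}"
  obtain C0 where "finite C0" "C0 \<subseteq> F" "F \<subseteq> (\<Union>c\<in>C0. cball c d)"
    using finite_cover_exists[OF assms] .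
  then have "?K \<noteq> {}"
    by blast
  then have "Inf ?K \<in> ?K"
    by (rule Inf_nat_def1)
  then obtain C where "finite C" "C \<subseteq> F" "F \<subseteq> (\<Union>c\<in>C. cball c d)" "card C = Inf ?K"
    by auto
  then show ?thesis
    using that unfolding covering_number_def by simp
qed

lemma covering_number_ge_1:
  fixes F :: "'c::heine_borel set"
  assumes "bounded F" "0 < d" "F \<noteq> {}"
  shows "1 \<le> covering_number F d"
proof -
  obtain C where C: "finite C" "C \<subseteq> F" "F \<subseteq> (\<Union>c\<in>C. cball c d)" "card C = covering_number F d"
    using covering_number_attained[OF assms(1,2)] .
  then have "C \<noteq> {}"
    using assms(3) by auto
  then have "0 < card C"
    using C(1) by (simp add: card_gt_0_iff)
  then show ?thesis
    using C(4) by simp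
qed

lemma covering_number_sqrt_tilde_ge_1:
  "channel M W \<Longrightarrow> space M \<noteq> {} \<Longrightarrow> 0 < d \<Longrightarrow> 1 \<le> covering_number (sqrt_tilde M W) d"
  by (intro covering_number_ge_1 bounded_sqrt_tilde) (auto simp: sqrt_tilde_def)

lemma sum_abs_diff_le_hellinger:
  fixes P Q :: "'a \<Rightarrow> real"
  assumes P: "\<And>x. x \<in> S \<Longrightarrow> 0 \<le> P x" "sum P S = 1"
    and Q: "\<And>x. x \<in> S \<Longrightarrow> 0 \<le> Q x" "sum Q S = 1"
  shows "(\<Sum>x\<in>S. \<bar>P x - Q x\<bar>) \<le> 2 * sqrt (2 - 2 * (\<Sum>x\<in>S. sqrt (P x * Q x)))"
proof -
  let ?F = "\<Sum>x\<in>S. sqrt (P x * Q x)"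
  let ?a = "\<lambda>x. \<bar>sqrt (P x) - sqrt (Q x)\<bar>" and ?b = "\<lambda>x. sqrt (P x) + sqrt (Q x)"
  have factor: "\<bar>P x - Q x\<bar> = ?a x * ?b x" if "x \<in> S" for x
  proof -
    have "P x - Q x = (sqrt (P x) - sqrt (Q x)) * ?b x"
      using P(1) Q(1) that by (simp add: algebra_simps)
    then show ?thesis
      using P(1)[OF that] Q(1)[OF that] by (simp add: abs_mult)
  qed
  have a2: "(\<Sum>x\<in>S. (?a x)\<^sup>2) = 2 - 2 * ?F"
  proof -
    have "(\<Sum>x\<in>S. (?a x)\<^sup>2) = (\<Sum>x\<in>S. P x + Q x - 2 * sqrt (P x * Q x))"
      using P(1) Q(1) by (intro sum.cong) (auto simp: power2_diff real_sqrt_mult)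
    then show ?thesis
      using P(2) Q(2) by (simp add: sum.distrib sum_subtractf sum_distrib_left)
  qed
  have b2: "(\<Sum>x\<in>S. (?b x)\<^sup>2) = 2 + 2 * ?F"
  proof -
    have "(\<Sum>x\<in>S. (?b x)\<^sup>2) = (\<Sum>x\<in>S. P x + Q x + 2 * sqrt (P x * Q x))"
      using P(1) Q(1) by (intro sum.cong) (auto simp: power2_sum real_sqrt_mult)
    then show ?thesis
      using P(2) Q(2) by (simp add: sum.distrib sum_distrib_left)
  qed
  have F: "?F \<le> 1"
    using a2 sum_nonneg[of S "\<lambda>x. (?a x)\<^sup>2"] by simp
  have "(\<Sum>x\<in>S. \<bar>P x - Q x\<bar>)\<^sup>2 = (\<Sum>x\<in>S. ?a x * ?b x)\<^sup>2"
    using factor by simp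
  also have "\<dots> \<le> (2 - 2 * ?F) * (2 + 2 * ?F)"
    using Cauchy_Schwarz_ineq_sum[of ?a ?b S] a2 b2 by simp
  also have "\<dots> = 8 - 8 * ?F - 4 * (1 - ?F)\<^sup>2"
    by (simp add: algebra_simps power2_eq_square)
  also have "\<dots> \<le> (2 * sqrt (2 - 2 * ?F))\<^sup>2"
    using F by (simp add: power_mult_distrib)
  finally show ?thesis
    by (rule power2_le_imp_le) (use F in simp)
qed

lemma Wset_diff_le_letterwise_dist:
  fixes W :: "'a \<Rightarrow> 'b::finite \<Rightarrow> real"
  assumes xs: "\<forall>x\<in>set xs. prob_vec W x" and xs': "\<forall>x\<in>set xs'. prob_vec W x"
    and len: "length xs' = length xs" and E: "E \<subseteq> {ys. length ys = length xs}" and "0 \<le> d"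
    and close: "\<And>i. i < length xs \<Longrightarrow> dist (sqrt_vec W (xs ! i)) (sqrt_vec W (xs' ! i)) \<le> 2 * d"
  shows "Wset W xs E - Wset W xs' E \<le> 4 * d * sqrt (length xs)"
proof -
  let ?n = "length xs" and ?L = "{ys::'b list. length ys = length xs}"
  let ?a = "\<lambda>i. 1 - bhattacharyya W (xs ! i) (xs' ! i)"
  have a: "?a i \<in> {0..1} \<and> ?a i \<le> 2 * d\<^sup>2" if "i < ?n" for i
  proof -
    have pv: "prob_vec W (xs ! i)" "prob_vec W (xs' ! i)"
      using xs xs' len that by auto
    have "(dist (sqrt_vec W (xs ! i)) (sqrt_vec W (xs' ! i)))\<^sup>2 \<le> (2 * d)\<^sup>2"
      using close[OF that] by (intro power_mono) auto
    then show ?thesis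
      using dist_sqrt_vec_squared[OF pv] bhattacharyya_nonneg[OF pv]
        zero_le_power2[of "dist (sqrt_vec W (xs ! i)) (sqrt_vec W (xs' ! i))"]
      by (simp add: power_mult_distrib)
  qed
  have "1 - ?n * (2 * d\<^sup>2) \<le> 1 - (\<Sum>i<?n. ?a i)"
    using sum_mono[of "{..<?n}" ?a "\<lambda>_. 2 * d\<^sup>2"] a by simp
  also have "\<dots> \<le> (\<Prod>i<?n. 1 - ?a i)"
    using a by (intro Weierstrass_prod_ineq) auto
  also have "\<dots> = (\<Sum>ys\<in>?L. sqrt (Wseq W xs ys * Wseq W xs' ys))"
    by (simp add: bhattacharyya_def sum_sqrt_Wseq_mult[OF len])
  finally have F: "1 - ?n * (2 * d\<^sup>2) \<le> (\<Sum>ys\<in>?L. sqrt (Wseq W xs ys * Wseq W xs' ys))" .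
  have "Wset W xs E - Wset W xs' E \<le> (\<Sum>ys\<in>E. \<bar>Wseq W xs ys - Wseq W xs' ys\<bar>)"
    unfolding Wset_def sum_subtractf[symmetric] by (intro sum_mono) auto
  also have "\<dots> \<le> (\<Sum>ys\<in>?L. \<bar>Wseq W xs ys - Wseq W xs' ys\<bar>)"
    by (intro sum_mono2 finite_list_length E) auto
  also have "\<dots> \<le> 2 * sqrt (2 - 2 * (\<Sum>ys\<in>?L. sqrt (Wseq W xs ys * Wseq W xs' ys)))"
    using sum_Wseq[OF xs] sum_Wseq[OF xs'] len
    by (intro sum_abs_diff_le_hellinger Wseq_nonneg xs xs') auto
  also have "\<dots> \<le> 2 * sqrt (4 * d\<^sup>2 * ?n)"
    using F by (simp add: algebra_simps)
  also have "\<dots> = 4 * d * sqrt ?n"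
    using \<open>0 \<le> d\<close> by (simp add: real_sqrt_mult)
  finally show ?thesis .
qed

lemma ereal_le_mult_of_gt:
  fixes x D :: ereal and c :: real
  assumes "0 < c" and "\<And>e. D < ereal e \<Longrightarrow> x \<le> ereal (c * e)"
  shows "x \<le> ereal c * D"
proof (rule dense_ge)
  fix y
  assume y: "ereal c * D < y"
  show "x \<le> y"
  proof (cases y)
    case (real z)
    then have "D < ereal (z / c)"
      using y \<open>0 < c\<close> by (cases D) (auto simp: field_simps)
    then show ?thesis
      using assms(2)[of "z / c"] \<open>0 < c\<close> real by simp
  qed (use y in auto)
qed

lemma ereal_mult_le_of_lt:
  fixes x D :: ereal and c :: real
  assumes "0 < c" and "\<And>r. ereal r < D \<Longrightarrow> ereal (c * r) \<le> x"
  shows "ereal c * D \<le> x"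
proof (rule dense_le)
  fix y
  assume y: "y < ereal c * D"
  show "y \<le> x"
  proof (cases y)
    case (real z)
    then have "ereal (z / c) < D"
      using y \<open>0 < c\<close> by (cases D) (auto simp: field_simps)
    then show ?thesis
      using assms(2)[of "z / c"] \<open>0 < c\<close> real by simp
  qed (use y in auto)
qed

lemma frequently_le_imp_le_Limsup:
  fixes f :: "'a \<Rightarrow> 'b::complete_linorder"
  assumes "\<exists>\<^sub>F x in F. c \<le> f x"
  shows "c \<le> Limsup F f"
proof (rule ccontr)
  assume "\<not> c \<le> Limsup F f"
  then have "\<forall>\<^sub>F x in F. f x < c"
    by (intro Limsup_lessD) simp
  with assms have "\<exists>\<^sub>F x in F. f x < c \<and> c \<le> f x"
    by (rule frequently_eventually_conj)
  then have "\<exists>\<^sub>F x in F. False"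
    by (rule frequently_elim1) auto
  then show False
    by simp
qed

lemma less_Limsup_imp_frequently:
  fixes f :: "'a \<Rightarrow> 'b::complete_linorder"
  assumes "c < Limsup F f"
  shows "\<exists>\<^sub>F x in F. c < f x"
proof (rule ccontr)
  assume "\<not> ?thesis"
  then have "\<forall>\<^sub>F x in F. f x \<le> c"
    by (simp add: not_frequently not_less)
  then have "Limsup F f \<le> c"
    by (rule Limsup_bounded)
  with assms show False
    by simp
qed

section \<open>The converse bound\<close>

lemma N_DI_le:
  assumes "\<And>N u E. DI_code M W n N l1 l2 u E \<Longrightarrow> N \<le> K"
  shows "N_DI M W n l1 l2 \<le> enat K"
  unfolding N_DI_def by (rule Sup_least) (use assms in auto)

lemma N_DI_ge:
  assumes "DI_code M W n N l1 l2 u E"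
  shows "enat N \<le> N_DI M W n l1 l2"
  unfolding N_DI_def by (rule Sup_upper) (use assms in auto)

lemma DI_code_single:
  assumes ch: "channel M W" and x: "x \<in> space M" and "0 \<le> l1"
  shows "DI_code M W n 1 l1 l2 (\<lambda>_. replicate n x) (\<lambda>_. {ys. length ys = n})"
proof -
  have "Wset W (replicate n x) {ys. length ys = n} = 1"
    using Wset_all_words[of "replicate n x" W] channel_prob_vec[OF ch x] by simp
  then show ?thesis
    unfolding DI_code_def using x assms(3) by auto
qed

lemma N_DI_ge_1:
  assumes "channel M W" "space M \<noteq> {}" "0 \<le> l1"
  shows "1 \<le> N_DI M W n l1 l2"
proof -
  obtain x where "x \<in> space M"
    using assms(2) by auto
  then show ?thesis
    using N_DI_ge[OF DI_code_single[OF assms(1) _ assms(3)]] by (simp add: one_enat_def)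
qed

lemma DI_rate_ge_code_size:
  assumes code: "DI_code M W n N l1 l2 u E" and "2 \<le> n" "1 \<le> N"
  shows "ereal (log 2 N / (n * log 2 n)) \<le> DI_rate M W n l1 l2"
proof (cases "N_DI M W n l1 l2")
  case (enat N')
  then have "N \<le> N'"
    using N_DI_ge[OF code] by simp
  then have "log 2 N / (n * log 2 n) \<le> log 2 N' / (n * log 2 n)"
    using assms(2,3) by (intro divide_right_mono) auto
  then show ?thesis
    unfolding DI_rate_def using enat by simp
qed (simp add: DI_rate_def)

lemma DI_codewords_not_close:
  fixes W :: "'a \<Rightarrow> 'b::finite \<Rightarrow> real"
  assumes ch: "channel M W" and code: "DI_code M W n N l1 l2 u E"
    and jk: "j < N" "k < N" "j \<noteq> k" and "0 \<le> d" and small: "4 * d * sqrt n < 1 - l1 - l2"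
  shows "\<exists>i<n. 2 * d < dist (sqrt_vec W (u j ! i)) (sqrt_vec W (u k ! i))"
proof (rule ccontr)
  assume "\<not> ?thesis"
  then have close: "dist (sqrt_vec W (u j ! i)) (sqrt_vec W (u k ! i)) \<le> 2 * d" if "i < n" for i
    using that by (meson not_less)
  have cw: "length (u j) = n" "length (u k) = n" "set (u j) \<subseteq> space M" "set (u k) \<subseteq> space M"
    "E j \<subseteq> {ys. length ys = n}" "1 - l1 \<le> Wset W (u j) (E j)" "Wset W (u k) (E j) \<le> l2"
    using code jk unfolding DI_code_def by auto
  have "Wset W (u j) (E j) - Wset W (u k) (E j) \<le> 4 * d * sqrt (length (u j))"
    using cw close \<open>0 \<le> d\<close> channel_prob_vec[OF ch] by (intro Wset_diff_le_letterwise_dist) auto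
  with cw small show False
    by simp
qed

lemma DI_code_size_le_covering:
  fixes W :: "'a \<Rightarrow> 'b::finite \<Rightarrow> real"
  assumes ch: "channel M W" and code: "DI_code M W n N l1 l2 u E"
    and d: "0 < d" "4 * d * sqrt n < 1 - l1 - l2"
    and C: "finite C" "sqrt_tilde M W \<subseteq> (\<Union>c\<in>C. cball c d)"
  shows "N \<le> card C ^ n"
proof -
  have "sqrt_vec W x \<in> (\<Union>c\<in>C. cball c d)" if "x \<in> space M" for x
    using C(2) that unfolding sqrt_tilde_eq_image by (rule subsetD[OF _ imageI])
  then have "\<forall>x\<in>space M. \<exists>c. c \<in> C \<and> dist c (sqrt_vec W x) \<le> d"
    by auto
  then obtain q where q: "\<And>x. x \<in> space M \<Longrightarrow> q x \<in> C \<and> dist (q x) (sqrt_vec W x) \<le> d"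
    by metis
  have cw: "length (u j) = n" "set (u j) \<subseteq> space M" if "j < N" for j
    using code that unfolding DI_code_def by auto
  have "inj_on (\<lambda>j. map q (u j)) {..<N}"
  proof (rule inj_onI, rule ccontr)
    fix j k
    assume j: "j \<in> {..<N}" and k: "k \<in> {..<N}" and eq: "map q (u j) = map q (u k)" and "j \<noteq> k"
    have "\<exists>i<n. 2 * d < dist (sqrt_vec W (u j ! i)) (sqrt_vec W (u k ! i))"
      using j k d by (intro DI_codewords_not_close[OF ch code _ _ \<open>j \<noteq> k\<close>]) auto
    then obtain i where i: "i < n" and far: "2 * d < dist (sqrt_vec W (u j ! i)) (sqrt_vec W (u k ! i))"
      by blast
    have mem: "u j ! i \<in> space M" "u k ! i \<in> space M"
      using cw[of j] cw[of k] j k i by (auto intro!: subsetD[OF _ nth_mem])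
    have "q (u j ! i) = q (u k ! i)"
      using arg_cong[OF eq, of "\<lambda>l. l ! i"] cw[of j] cw[of k] j k i by simp
    moreover have "dist (sqrt_vec W (u j ! i)) (sqrt_vec W (u k ! i))
        \<le> dist (sqrt_vec W (u j ! i)) (q (u k ! i)) + dist (q (u k ! i)) (sqrt_vec W (u k ! i))"
      by (rule dist_triangle)
    ultimately show False
      using q[OF mem(1)] q[OF mem(2)] far by (simp add: dist_commute)
  qed
  moreover have "(\<lambda>j. map q (u j)) ` {..<N} \<subseteq> words C n"
    unfolding words_def using cw(1) q subsetD[OF cw(2)] by auto
  ultimately have "card {..<N} \<le> card (words C n)"
    by (intro card_inj_on_le finite_words C(1))
  then show ?thesis
    by (simp add: card_words C(1))
qed

lemma DI_rate_le_covering: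
  fixes W :: "'a \<Rightarrow> 'b::finite \<Rightarrow> real"
  assumes ch: "channel M W" and ne: "space M \<noteq> {}" and "0 < l1"
    and n: "2 \<le> n" and d: "0 < d" "4 * d * sqrt n < 1 - l1 - l2"
  shows "DI_rate M W n l1 l2 \<le> ereal (log 2 (covering_number (sqrt_tilde M W) d) / log 2 n)"
proof -
  let ?G = "covering_number (sqrt_tilde M W) d"
  obtain C where C: "finite C" "C \<subseteq> sqrt_tilde M W" "sqrt_tilde M W \<subseteq> (\<Union>c\<in>C. cball c d)" "card C = ?G"
    using covering_number_attained[OF bounded_sqrt_tilde[OF ch] d(1)] .
  have "N_DI M W n l1 l2 \<le> enat (?G ^ n)"
    using DI_code_size_le_covering[OF ch _ d C(1,3)] C(4) by (intro N_DI_le) auto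
  moreover have "1 \<le> N_DI M W n l1 l2"
    using N_DI_ge_1[OF ch ne] \<open>0 < l1\<close> by simp
  ultimately obtain N where N: "N_DI M W n l1 l2 = enat N" "1 \<le> N" "N \<le> ?G ^ n"
    by (cases "N_DI M W n l1 l2") (auto simp: one_enat_def)
  have G: "1 \<le> ?G"
    using covering_number_sqrt_tilde_ge_1[OF ch ne d(1)] .
  have "log 2 N \<le> log 2 (real (?G ^ n))"
    using N G by (intro log_le_cancel_iff[THEN iffD2]) (auto simp del: of_nat_power)
  also have "\<dots> = n * log 2 ?G"
    using G by (simp add: log_nat_power)
  finally have "log 2 N / (n * log 2 n) \<le> n * log 2 ?G / (n * log 2 n)"
    using n by (intro divide_right_mono) auto
  also have "\<dots> = log 2 ?G / log 2 n"
    using n by simp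
  finally show ?thesis
    unfolding DI_rate_def using N(1) by simp
qed

lemma limsup_DI_rate_le_half_dim:
  fixes W :: "'a \<Rightarrow> 'b::finite \<Rightarrow> real"
  assumes ch: "channel M W" and ne: "space M \<noteq> {}" and l: "0 < l1" "0 < l2" "l1 + l2 < 1"
  shows "limsup (\<lambda>n. DI_rate M W n l1 l2) \<le> ereal (1/2) * upper_minkowski_dim (sqrt_tilde M W)"
proof (rule ereal_le_mult_of_gt)
  let ?G = "\<lambda>d. real (covering_number (sqrt_tilde M W) d)"
  fix e
  assume "upper_minkowski_dim (sqrt_tilde M W) < ereal e"
  then have small: "\<forall>\<^sub>F d in at_right 0. log 2 (?G d) / - log 2 d < e"
    unfolding upper_minkowski_dim_def by (auto dest: Limsup_lessD)
  define c where "c = (1 - l1 - l2) / 8"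
  have c: "0 < c" "c < 1"
    using l by (auto simp: c_def)
  have "filterlim (\<lambda>n::nat. c / sqrt n) (at_right 0) sequentially"
    using c(1) by real_asymp
  with small have small_seq: "\<forall>\<^sub>F n in sequentially. log 2 (?G (c / sqrt n)) / - log 2 (c / sqrt n) < e"
    by (rule eventually_compose_filterlim)
  have "\<forall>\<^sub>F n in sequentially. DI_rate M W n l1 l2 \<le> ereal (e * - log 2 (c / sqrt n) / log 2 n)"
    using small_seq eventually_ge_at_top[of 2]
  proof eventually_elim
    case (elim n)
    have "1 \<le> sqrt n"
      using elim(2) by simp
    then have "c < sqrt n"
      using c by linarith
    then have pos: "0 < c / sqrt n" "0 < - log 2 (c / sqrt n)" "0 < log 2 n"
      using c elim(2) by (auto simp: field_simps)
    have "4 * (c / sqrt n) * sqrt n < 1 - l1 - l2"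
      using elim(2) l by (simp add: c_def)
    then have rate: "DI_rate M W n l1 l2 \<le> ereal (log 2 (?G (c / sqrt n)) / log 2 n)"
      using DI_rate_le_covering[OF ch ne l(1) elim(2) pos(1)] by simp
    have "log 2 (?G (c / sqrt n)) < e * - log 2 (c / sqrt n)"
      using elim(1) by (simp only: pos_divide_less_eq[OF pos(2)])
    then have "log 2 (?G (c / sqrt n)) / log 2 n \<le> e * - log 2 (c / sqrt n) / log 2 n"
      using pos(3) by (intro divide_right_mono) auto
    then show ?case
      using rate by (simp add: order_trans)
  qed
  then have "limsup (\<lambda>n. DI_rate M W n l1 l2) \<le> limsup (\<lambda>n. ereal (e * - log 2 (c / sqrt n) / log 2 n))"
    by (rule Limsup_mono)
  also have "\<dots> = ereal (1/2 * e)"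
  proof (intro lim_imp_Limsup tendsto_ereal)
    show "((\<lambda>n. e * - log 2 (c / sqrt (real n)) / log 2 (real n)) \<longlongrightarrow> 1/2 * e) sequentially"
      using c(1) by real_asymp
  qed simp
  finally show "limsup (\<lambda>n. DI_rate M W n l1 l2) \<le> ereal (1/2 * e)" .
qed simp

section \<open>Codes over separated inputs\<close>

definition hamming_dist :: "'a list \<Rightarrow> 'a list \<Rightarrow> nat" where
  "hamming_dist u v = (\<Sum>i<length u. if u ! i = v ! i then 0 else 1)"

lemma hamming_dist_Cons: "hamming_dist (a # u) (b # v) = (if a = b then 0 else 1) + hamming_dist u v"
  unfolding hamming_dist_def by (simp del: sum.lessThan_Suc add: sum.lessThan_Suc_shift)

lemma hamming_dist_self [simp]: "hamming_dist u u = 0"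
  unfolding hamming_dist_def by simp

lemma hamming_dist_commute: "length u = length v \<Longrightarrow> hamming_dist u v = hamming_dist v u"
  unfolding hamming_dist_def by (intro sum.cong) auto

lemma sum_power_hamming_dist:
  fixes t :: real
  assumes A: "finite A" and c: "c \<in> words A n"
  shows "(\<Sum>v\<in>words A n. t ^ hamming_dist c v) = (1 + (real (card A) - 1) * t) ^ n"
  using c
proof (induction n arbitrary: c)
  case 0
  have "words A 0 = {[]}"
    by (auto simp: words_def)
  with 0 show ?case
    by (simp add: hamming_dist_def)
next
  case (Suc n)
  then obtain a c' where c: "c = a # c'" "a \<in> A" "c' \<in> words A n"
    unfolding words_def by (cases c) auto
  have "(\<Sum>b\<in>A. t ^ (if a = b then 0 else 1)) = 1 + (\<Sum>b\<in>A - {a}. t ^ (if a = b then 0 else 1))"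
    using A c(2) by (simp add: sum.remove[of A a])
  also have "\<dots> = 1 + (\<Sum>b\<in>A - {a}. t)"
    by (intro arg_cong[where f = "(+) 1"] sum.cong) auto
  also have "\<dots> = 1 + (real (card A) - 1) * t"
  proof -
    have "1 \<le> card A"
      using A c(2) by (auto simp: Suc_le_eq card_gt_0_iff)
    then show ?thesis
      using A c(2) by (simp add: of_nat_diff)
  qed
  finally have letter: "(\<Sum>b\<in>A. t ^ (if a = b then 0 else 1)) = 1 + (real (card A) - 1) * t" .
  have "(\<Sum>v\<in>words A (Suc n). t ^ hamming_dist c v)
      = (\<Sum>b\<in>A. \<Sum>v\<in>words A n. t ^ (if a = b then 0 else 1) * t ^ hamming_dist c' v)"
    unfolding sum_words_Suc c(1) hamming_dist_Cons by (simp add: power_add)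
  also have "\<dots> = (\<Sum>b\<in>A. t ^ (if a = b then 0 else 1)) * (\<Sum>v\<in>words A n. t ^ hamming_dist c' v)"
    by (simp add: sum_distrib_left sum_distrib_right sum.swap[of _ A])
  finally show ?case
    using letter Suc.IH[OF c(3)] by simp
qed

lemma card_hamming_ball_le:
  assumes A: "finite A" "A \<noteq> {}" and c: "c \<in> words A n"
  shows "card {v\<in>words A n. hamming_dist c v < k} \<le> 2 ^ n * card A ^ k"
proof -
  let ?m = "real (card A)" and ?B = "{v\<in>words A n. hamming_dist c v < k}"
  have m: "1 \<le> ?m"
    using A by (simp add: Suc_leI card_gt_0_iff)
  have "real (card ?B) / ?m ^ k = (\<Sum>v\<in>?B. (1 / ?m) ^ k)"
    by (simp add: power_one_over)
  also have "\<dots> \<le> (\<Sum>v\<in>?B. (1 / ?m) ^ hamming_dist c v)"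
    using m by (intro sum_mono power_decreasing) auto
  also have "\<dots> \<le> (\<Sum>v\<in>words A n. (1 / ?m) ^ hamming_dist c v)"
    using A by (intro sum_mono2 finite_words) auto
  also have "\<dots> = (2 - 1 / ?m) ^ n"
    using m by (simp add: sum_power_hamming_dist[OF A(1) c] diff_divide_distrib)
  also have "\<dots> \<le> 2 ^ n"
    using m by (intro power_mono) (auto simp: field_simps)
  finally have "real (card ?B) \<le> 2 ^ n * ?m ^ k"
    using m by (simp add: divide_le_eq)
  then have "real (card ?B) \<le> real (2 ^ n * card A ^ k)"
    by simp
  then show ?thesis
    by (simp only: of_nat_le_iff)
qed

lemma ex_maximal_set:
  assumes "P {}" and bounded: "\<And>C. P C \<Longrightarrow> finite C \<and> card C \<le> b"
  obtains C where "P C" "\<And>x. x \<notin> C \<Longrightarrow> \<not> P (insert x C)"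
proof -
  obtain C where C: "P C" and max: "\<And>C'. P C' \<Longrightarrow> card C' \<le> card C"
    using ex_has_greatest_nat[of P "{}" card "Suc b"] assms by (metis less_Suc_eq_le)
  have "\<not> P (insert x C)" if "x \<notin> C" for x
  proof
    assume "P (insert x C)"
    then have "card (insert x C) \<le> card C"
      by (rule max)
    with that bounded[OF C] show False
      by simp
  qed
  then show ?thesis
    by (rule that[OF C])
qed

lemma gilbert_varshamov:
  assumes A: "finite A" "A \<noteq> {}" and k: "1 \<le> k"
  obtains C where "C \<subseteq> words A n" "\<And>u v. u \<in> C \<Longrightarrow> v \<in> C \<Longrightarrow> u \<noteq> v \<Longrightarrow> k \<le> hamming_dist u v"
    "card A ^ n \<le> card C * (2 ^ n * card A ^ k)"
proof -
  let ?P = "\<lambda>C. C \<subseteq> words A n \<and> (\<forall>u\<in>C. \<forall>v\<in>C. u \<noteq> v \<longrightarrow> k \<le> hamming_dist u v)"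
  have fin: "finite (words A n)"
    using A(1) by (rule finite_words)
  obtain C where C: "?P C" and max: "\<And>v. v \<notin> C \<Longrightarrow> \<not> ?P (insert v C)"
    by (rule ex_maximal_set[of ?P "card (words A n)"]) (auto intro: card_mono finite_subset[OF _ fin])
  have finC: "finite C"
    using C fin finite_subset by blast
  have cover: "words A n \<subseteq> (\<Union>c\<in>C. {v\<in>words A n. hamming_dist c v < k})"
  proof
    fix v
    assume v: "v \<in> words A n"
    show "v \<in> (\<Union>c\<in>C. {v\<in>words A n. hamming_dist c v < k})"
    proof (rule ccontr)
      assume "\<not> ?thesis"
      then have far: "\<forall>c\<in>C. k \<le> hamming_dist c v"
        using v by auto
      then have "v \<notin> C"
        using k by force
      moreover have far': "k \<le> hamming_dist v c" if "c \<in> C" for c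
      proof -
        have "length c = length v"
          using C v that by (auto simp: words_def)
        moreover have "k \<le> hamming_dist c v"
          using far that by blast
        ultimately show ?thesis
          by (metis hamming_dist_commute)
      qed
      moreover have "?P (insert v C)"
        using C v far far' by auto
      ultimately show False
        using max by blast
    qed
  qed
  have "card A ^ n \<le> card (\<Union>c\<in>C. {v\<in>words A n. hamming_dist c v < k})"
    unfolding card_words[OF A(1), symmetric] using cover by (intro card_mono) (auto intro: finite_subset[OF _ fin])
  also have "\<dots> \<le> (\<Sum>c\<in>C. card {v\<in>words A n. hamming_dist c v < k})"
    by (rule card_UN_le[OF finC])
  also have "\<dots> \<le> (\<Sum>c\<in>C. 2 ^ n * card A ^ k)"
    using C by (intro sum_mono card_hamming_ball_le[OF A]) auto
  finally have "card A ^ n \<le> card C * (2 ^ n * card A ^ k)"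
    by simp
  with C show ?thesis
    by (intro that) auto
qed

lemma exists_large_fibre:
  assumes S: "finite S" and T: "finite T" "T \<noteq> {}" and f: "f ` S \<subseteq> T"
  shows "\<exists>b\<in>T. card S \<le> card T * card {x\<in>S. f x = b}"
proof -
  let ?g = "\<lambda>b. card {x\<in>S. f x = b}"
  have "Max (?g ` T) \<in> ?g ` T"
    using T by (intro Max_in) auto
  then obtain b where b: "b \<in> T" "?g b = Max (?g ` T)"
    by auto
  have "S = (\<Union>b\<in>T. {x\<in>S. f x = b})"
    using f by auto
  then have "card S \<le> (\<Sum>b\<in>T. ?g b)"
    using card_UN_le[OF T(1), of "\<lambda>b. {x\<in>S. f x = b}"] by simp
  also have "\<dots> \<le> card T * ?g b"
    using sum_bounded_above[of T ?g "?g b"] b(2) T(1) by simp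
  finally show ?thesis
    using b(1) by blast
qed

lemma exists_large_bin:
  fixes g :: "'a \<Rightarrow> real"
  assumes S: "finite S" and w: "0 < w" and g: "\<And>x. x \<in> S \<Longrightarrow> 0 \<le> g x \<and> g x \<le> B"
  obtains S' where "S' \<subseteq> S" "card S \<le> (nat \<lfloor>B / w\<rfloor> + 1) * card S'"
    "\<And>x y. x \<in> S' \<Longrightarrow> y \<in> S' \<Longrightarrow> \<bar>g x - g y\<bar> < w"
proof -
  define bin where "bin x = nat \<lfloor>g x / w\<rfloor>" for x
  have "bin ` S \<subseteq> {0..nat \<lfloor>B / w\<rfloor>}"
    using g w by (auto simp: bin_def intro!: nat_mono floor_mono divide_right_mono)
  then have "\<exists>b\<in>{0..nat \<lfloor>B / w\<rfloor>}. card S \<le> card {0..nat \<lfloor>B / w\<rfloor>} * card {x\<in>S. bin x = b}"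
    by (intro exists_large_fibre[OF S]) auto
  then obtain b where "card S \<le> card {0..nat \<lfloor>B / w\<rfloor>} * card {x\<in>S. bin x = b}"
    by blast
  moreover have "\<bar>g x - g y\<bar> < w" if "x \<in> S" "y \<in> S" "bin x = b" "bin y = b" for x y
  proof -
    have "0 \<le> \<lfloor>g x / w\<rfloor>" "0 \<le> \<lfloor>g y / w\<rfloor>"
      using that(1,2) g w by simp_all
    moreover have "nat \<lfloor>g x / w\<rfloor> = nat \<lfloor>g y / w\<rfloor>"
      using that(3,4) unfolding bin_def by simp
    ultimately have "\<lfloor>g x / w\<rfloor> = \<lfloor>g y / w\<rfloor>"
      by (simp only: eq_nat_nat_iff)
    then have "\<bar>g x / w - g y / w\<bar> < 1"
      by linarith
    then show ?thesis
      using w by (simp add: abs_divide pos_divide_less_eq flip: diff_divide_distrib)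
  qed
  ultimately show ?thesis
    by (intro that[of "{x\<in>S. bin x = b}"]) auto
qed

definition separated_inputs :: "'a measure \<Rightarrow> ('a \<Rightarrow> 'b::finite \<Rightarrow> real) \<Rightarrow> real \<Rightarrow> 'a set \<Rightarrow> bool" where
  "separated_inputs M W d A \<longleftrightarrow> A \<subseteq> space M \<and> finite A \<and>
     (\<forall>a\<in>A. \<forall>b\<in>A. a \<noteq> b \<longrightarrow> d < dist (sqrt_vec W a) (sqrt_vec W b))"

lemma card_separated_inputs_le:
  fixes W :: "'a \<Rightarrow> 'b::finite \<Rightarrow> real"
  assumes A: "separated_inputs M W d A"
    and C: "finite C" "sqrt_tilde M W \<subseteq> (\<Union>c\<in>C. cball c (d / 2))"
  shows "card A \<le> card C"
proof -
  have "sqrt_vec W a \<in> (\<Union>c\<in>C. cball c (d / 2))" if "a \<in> A" for a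
    using A C(2) that unfolding separated_inputs_def sqrt_tilde_eq_image by blast
  then have "\<forall>a\<in>A. \<exists>c. c \<in> C \<and> dist c (sqrt_vec W a) \<le> d / 2"
    by auto
  then obtain g where g: "\<And>a. a \<in> A \<Longrightarrow> g a \<in> C \<and> dist (g a) (sqrt_vec W a) \<le> d / 2"
    by metis
  have "inj_on g A"
  proof (rule inj_onI, rule ccontr)
    fix a b
    assume a: "a \<in> A" and b: "b \<in> A" and eq: "g a = g b" and "a \<noteq> b"
    have "dist (sqrt_vec W a) (sqrt_vec W b) \<le> dist (sqrt_vec W a) (g a) + dist (g a) (sqrt_vec W b)"
      by (rule dist_triangle)
    also have "\<dots> \<le> d"
      using g[OF a] g[OF b] eq by (simp add: dist_commute)
    finally show False
      using A a b \<open>a \<noteq> b\<close> unfolding separated_inputs_def by force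
  qed
  moreover have "g ` A \<subseteq> C"
    using g by auto
  ultimately show ?thesis
    using C(1) by (rule card_inj_on_le)
qed

text \<open>A maximal separated set is a covering, so it is at least as large as the covering number.\<close>

lemma exists_separated_inputs:
  fixes W :: "'a \<Rightarrow> 'b::finite \<Rightarrow> real"
  assumes ch: "channel M W" and d: "0 < d"
  obtains A where "separated_inputs M W d A" "covering_number (sqrt_tilde M W) d \<le> card A"
proof -
  have half: "0 < d / 2"
    using d by simp
  obtain C where C: "finite C" "C \<subseteq> sqrt_tilde M W" "sqrt_tilde M W \<subseteq> (\<Union>c\<in>C. cball c (d / 2))"
    using finite_cover_exists[OF bounded_sqrt_tilde[OF ch] half] .
  obtain A where A: "separated_inputs M W d A"
    and max: "\<And>x. x \<notin> A \<Longrightarrow> \<not> separated_inputs M W d (insert x A)"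
    by (rule ex_maximal_set[of "separated_inputs M W d" "card C"])
      (auto simp: separated_inputs_def intro: card_separated_inputs_le[OF _ C(1,3)])
  have "sqrt_tilde M W \<subseteq> (\<Union>a\<in>A. cball (sqrt_vec W a) d)"
  proof
    fix z
    assume "z \<in> sqrt_tilde M W"
    then obtain x where x: "x \<in> space M" "z = sqrt_vec W x"
      by (auto simp: sqrt_tilde_eq_image)
    show "z \<in> (\<Union>a\<in>A. cball (sqrt_vec W a) d)"
    proof (rule ccontr)
      assume "z \<notin> (\<Union>a\<in>A. cball (sqrt_vec W a) d)"
      then have far: "\<forall>a\<in>A. d < dist (sqrt_vec W a) (sqrt_vec W x)"
        using x by (auto simp: not_le)
      then have "x \<notin> A"
        using d by fastforce
      moreover have "separated_inputs M W d (insert x A)"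
        using A far x by (auto simp: separated_inputs_def dist_commute)
      ultimately show False
        using max by blast
    qed
  qed
  then have "covering_number (sqrt_tilde M W) d \<le> card (sqrt_vec W ` A)"
    using A by (intro covering_number_le_card) (auto simp: separated_inputs_def sqrt_tilde_eq_image)
  also have "\<dots> \<le> card A"
    by (rule card_image_le) (use A in \<open>simp add: separated_inputs_def\<close>)
  finally show ?thesis
    using A that by blast
qed

section \<open>Truncated log-likelihood tests\<close>

definition trunc_ln :: "real \<Rightarrow> ('a \<Rightarrow> 'b \<Rightarrow> real) \<Rightarrow> 'a \<Rightarrow> 'b \<Rightarrow> real" where
  "trunc_ln e W x y = ln (max (W x y) e)"

definition trunc_divergence :: "real \<Rightarrow> ('a \<Rightarrow> 'b::finite \<Rightarrow> real) \<Rightarrow> 'a \<Rightarrow> 'a \<Rightarrow> real" where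
  "trunc_divergence e W a b = (\<Sum>y\<in>UNIV. W b y * (trunc_ln e W b y - trunc_ln e W a y))"

definition loglik :: "real \<Rightarrow> ('a \<Rightarrow> 'b \<Rightarrow> real) \<Rightarrow> 'a list \<Rightarrow> 'b list \<Rightarrow> real" where
  "loglik e W u ys = (\<Sum>i<length u. trunc_ln e W (u ! i) (ys ! i))"

definition mean_loglik :: "real \<Rightarrow> ('a \<Rightarrow> 'b::finite \<Rightarrow> real) \<Rightarrow> 'a list \<Rightarrow> 'a list \<Rightarrow> real" where
  "mean_loglik e W u v = (\<Sum>i<length u. \<Sum>y\<in>UNIV. W (v ! i) y * trunc_ln e W (u ! i) y)"

lemma trunc_ln_bounds:
  assumes "prob_vec W x" "0 < e" "e \<le> 1"
  shows "ln e \<le> trunc_ln e W x y \<and> trunc_ln e W x y \<le> 0"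
  using prob_vec_le_1[OF assms(1), of y] assms(2,3) by (simp add: trunc_ln_def)

lemma hellinger_term_le_ln_ratio:
  fixes p q e :: real
  assumes p: "0 \<le> p" and q: "0 \<le> q" and e: "0 < e"
  shows "2 * p - 2 * sqrt (max q e * p) \<le> p * (ln (max p e) - ln (max q e))"
proof (cases "p = 0")
  case False
  then have pp: "0 < p"
    using p by simp
  define qt where "qt = max q e"
  have qt: "0 < qt"
    unfolding qt_def using e by simp
  define r where "r = sqrt (qt / p)"
  have r: "0 < r" "r\<^sup>2 = qt / p"
    unfolding r_def using qt pp by simp_all
  have "ln qt - ln p = ln (r\<^sup>2)"
    using qt pp r(2) by (simp add: ln_div)
  also have "\<dots> = 2 * ln r"
    using r(1) by (simp add: ln_realpow)
  finally have ln_r: "p * (ln p - ln qt) = - 2 * p * ln r"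
    by (simp add: algebra_simps)
  have pr: "p * r = sqrt (qt * p)"
  proof -
    have "p * r = sqrt (p\<^sup>2) * sqrt (qt / p)"
      unfolding r_def using pp by simp
    also have "\<dots> = sqrt (p\<^sup>2 * (qt / p))"
      by (rule real_sqrt_mult[symmetric])
    also have "p\<^sup>2 * (qt / p) = qt * p"
      using pp by (simp add: power2_eq_square)
    finally show ?thesis .
  qed
  have "2 * p - 2 * sqrt (qt * p) = - 2 * p * (r - 1)"
    using pr by (simp add: algebra_simps)
  also have "\<dots> \<le> - 2 * p * ln r"
    using ln_le_minus_one[OF r(1)] pp by simp
  also have "\<dots> \<le> p * (ln (max p e) - ln qt)"
    unfolding ln_r[symmetric] using pp by (intro mult_left_mono) auto
  finally show ?thesis
    unfolding qt_def .
qed simp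

lemma trunc_divergence_ge:
  fixes W :: "'a \<Rightarrow> 'b::finite \<Rightarrow> real"
  assumes a: "prob_vec W a" and b: "prob_vec W b" and e: "0 < e"
  shows "(dist (sqrt_vec W a) (sqrt_vec W b))\<^sup>2 - 2 * CARD('b) * sqrt e \<le> trunc_divergence e W a b"
proof -
  have pb: "0 \<le> W b y" "W b y \<le> 1" and pa: "0 \<le> W a y" for y
    using a b prob_vec_le_1[OF b] unfolding prob_vec_def by auto
  have pointwise: "2 * W b y - 2 * sqrt (max (W a y) e * W b y) \<le> W b y * (trunc_ln e W b y - trunc_ln e W a y)" for y
    unfolding trunc_ln_def by (rule hellinger_term_le_ln_ratio[OF pb(1) pa e])
  have root: "sqrt (max (W a y) e * W b y) \<le> sqrt (W a y * W b y) + sqrt e" for y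
  proof -
    have "max (W a y) e * W b y \<le> (W a y + e) * W b y"
      using pa[of y] pb[of y] e by (intro mult_right_mono) auto
    also have "\<dots> \<le> W a y * W b y + e"
      using pb[of y] e by (simp add: algebra_simps mult_left_le)
    finally have "max (W a y) e * W b y \<le> W a y * W b y + e" .
    then have "sqrt (max (W a y) e * W b y) \<le> sqrt (W a y * W b y + e)"
      by simp
    also have "\<dots> \<le> sqrt (W a y * W b y) + sqrt e"
      using pa[of y] pb[of y] e by (intro sqrt_add_le_add_sqrt) auto
    finally show ?thesis .
  qed
  have "(\<Sum>y\<in>UNIV. 2 * W b y - 2 * (sqrt (W a y * W b y) + sqrt e)) \<le> trunc_divergence e W a b"
    unfolding trunc_divergence_def using pointwise root by (intro sum_mono) (smt (verit))
  moreover have "(\<Sum>y\<in>UNIV. 2 * W b y - 2 * (sqrt (W a y * W b y) + sqrt e))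
      = 2 - 2 * bhattacharyya W a b - 2 * CARD('b) * sqrt e"
    using b unfolding prob_vec_def bhattacharyya_def
    by (simp add: sum_subtractf sum.distrib algebra_simps flip: sum_distrib_left)
  ultimately show ?thesis
    using dist_sqrt_vec_squared[OF a b] by simp
qed

lemma mean_loglik_gap:
  fixes W :: "'a \<Rightarrow> 'b::finite \<Rightarrow> real"
  assumes ch: "channel M W" and A: "separated_inputs M W d A" and "0 < d"
    and u: "u \<in> words A n" and v: "v \<in> words A n"
    and e: "0 < e" "4 * CARD('b) * sqrt e \<le> d\<^sup>2"
  shows "d\<^sup>2 / 2 * hamming_dist u v \<le> mean_loglik e W v v - mean_loglik e W u v"
proof -
  have len: "length u = n" "length v = n"
    using u v unfolding words_def by auto
  have "d\<^sup>2 / 2 * hamming_dist u v = (\<Sum>i<n. if u ! i = v ! i then 0 else d\<^sup>2 / 2)"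
    unfolding hamming_dist_def len by (simp add: sum_distrib_left of_nat_sum if_distrib cong: if_cong)
  also have "\<dots> \<le> (\<Sum>i<n. trunc_divergence e W (u ! i) (v ! i))"
  proof (rule sum_mono)
    fix i
    assume "i \<in> {..<n}"
    then have letters: "u ! i \<in> A" "v ! i \<in> A"
      using u v len unfolding words_def by (auto intro!: subsetD[OF _ nth_mem])
    then have pv: "prob_vec W (u ! i)" "prob_vec W (v ! i)"
      using A channel_prob_vec[OF ch] unfolding separated_inputs_def by auto
    show "(if u ! i = v ! i then 0 else d\<^sup>2 / 2) \<le> trunc_divergence e W (u ! i) (v ! i)"
    proof (cases "u ! i = v ! i")
      case False
      then have "d < dist (sqrt_vec W (u ! i)) (sqrt_vec W (v ! i))"
        using A letters unfolding separated_inputs_def by blast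
      then have "d\<^sup>2 \<le> (dist (sqrt_vec W (u ! i)) (sqrt_vec W (v ! i)))\<^sup>2"
        using \<open>0 < d\<close> by (intro power_mono) auto
      then show ?thesis
        using False trunc_divergence_ge[OF pv e(1)] e(2) by simp
    qed (simp add: trunc_divergence_def)
  qed
  also have "\<dots> = mean_loglik e W v v - mean_loglik e W u v"
    unfolding mean_loglik_def trunc_divergence_def len by (simp add: sum_subtractf algebra_simps)
  finally show ?thesis .
qed

lemma mean_loglik_bounds:
  fixes W :: "'a \<Rightarrow> 'b::finite \<Rightarrow> real"
  assumes ch: "channel M W" and "set u \<subseteq> space M" "set v \<subseteq> space M" "length v = length u"
    and e: "0 < e" "e \<le> 1"
  shows "length u * ln e \<le> mean_loglik e W u v \<and> mean_loglik e W u v \<le> 0"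
proof -
  have letter: "ln e \<le> (\<Sum>y\<in>UNIV. W (v ! i) y * trunc_ln e W (u ! i) y) \<and> (\<Sum>y\<in>UNIV. W (v ! i) y * trunc_ln e W (u ! i) y) \<le> 0"
    if "i < length u" for i
  proof -
    have "u ! i \<in> space M" "v ! i \<in> space M"
      using assms(2-4) that by (auto intro!: subsetD[OF _ nth_mem])
    then show ?thesis
      using channel_prob_vec[OF ch] e by (intro prob_vec_expectation_bounds trunc_ln_bounds) auto
  qed
  have "(\<Sum>i<length u. ln e) \<le> mean_loglik e W u v"
    unfolding mean_loglik_def by (rule sum_mono) (use letter in auto)
  moreover have "mean_loglik e W u v \<le> (\<Sum>i<length u. 0)"
    unfolding mean_loglik_def by (rule sum_mono) (use letter in auto)
  ultimately show ?thesis
    by simp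
qed

lemma Wset_loglik_deviation_le:
  fixes W :: "'a \<Rightarrow> 'b::finite \<Rightarrow> real"
  assumes ch: "channel M W" and u: "set u \<subseteq> space M" "length u = n" and v: "set v \<subseteq> space M" "length v = n"
    and e: "0 < e" "e \<le> 1" and S: "S \<subseteq> {ys. length ys = n}" and "0 < t"
    and far: "\<And>ys. ys \<in> S \<Longrightarrow> t \<le> \<bar>loglik e W u ys - mean_loglik e W u v\<bar>"
  shows "Wset W v S \<le> n * (ln e)\<^sup>2 / t\<^sup>2"
proof -
  have pv: "\<forall>x\<in>set v. prob_vec W x"
    using v channel_prob_vec[OF ch] by auto
  have bounds: "- (- ln e) \<le> trunc_ln e W (u ! i) y \<and> trunc_ln e W (u ! i) y \<le> 0" if "i < length v" for i y
    using that u v channel_prob_vec[OF ch] e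
    by (simp add: trunc_ln_bounds subsetD[OF _ nth_mem])
  have "Wset W v S \<le> (\<Sum>ys | length ys = length v. Wseq W v ys * (loglik e W u ys - mean_loglik e W u v)\<^sup>2) / t\<^sup>2"
    using S far u v by (intro Wset_le_chebyshev[OF pv _ \<open>0 < t\<close>]) auto
  also have "\<dots> \<le> length v * (- ln e)\<^sup>2 / t\<^sup>2"
    using sum_Wseq_additive_variance_le[OF pv bounds] u v
    by (intro divide_right_mono) (simp_all add: loglik_def mean_loglik_def)
  finally show ?thesis
    using v by simp
qed

lemma Wset_decoding_set_ge:
  fixes W :: "'a \<Rightarrow> 'b::finite \<Rightarrow> real"
  assumes ch: "channel M W" and u: "set u \<subseteq> space M" "length u = n"
    and e: "0 < e" "e \<le> 1" and "0 < t"
  shows "1 - n * (ln e)\<^sup>2 / t\<^sup>2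
    \<le> Wset W u {ys. length ys = n \<and> mean_loglik e W u u - 2 * t \<le> loglik e W u ys}"
proof -
  let ?L = "{ys::'b list. length ys = n}"
  let ?D = "{ys. length ys = n \<and> mean_loglik e W u u - 2 * t \<le> loglik e W u ys}"
  have "Wset W u ?L = 1"
    using Wset_all_words[of u W] u channel_prob_vec[OF ch] by auto
  moreover have "Wset W u ?L = Wset W u (?L - ?D) + Wset W u ?D"
    unfolding Wset_def by (rule sum.subset_diff) (auto intro: finite_list_length)
  moreover have "Wset W u (?L - ?D) \<le> n * (ln e)\<^sup>2 / t\<^sup>2"
    using \<open>0 < t\<close> by (intro Wset_loglik_deviation_le[OF ch u u e]) auto
  ultimately show ?thesis
    by simp
qed

lemma Wset_decoding_set_le:
  fixes W :: "'a \<Rightarrow> 'b::finite \<Rightarrow> real"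
  assumes ch: "channel M W" and u: "set u \<subseteq> space M" "length u = n" and v: "set v \<subseteq> space M" "length v = n"
    and e: "0 < e" "e \<le> 1" and "0 < t"
    and gap: "mean_loglik e W u v + 3 * t \<le> mean_loglik e W u u"
  shows "Wset W v {ys. length ys = n \<and> mean_loglik e W u u - 2 * t \<le> loglik e W u ys} \<le> n * (ln e)\<^sup>2 / t\<^sup>2"
  using gap \<open>0 < t\<close> by (intro Wset_loglik_deviation_le[OF ch u v e]) auto

lemma DI_code_of_set:
  assumes "finite C"
    and own: "\<And>c. c \<in> C \<Longrightarrow> length c = n \<and> set c \<subseteq> space M \<and> D c \<subseteq> {ys. length ys = n} \<and> 1 - l1 \<le> Wset W c (D c)"
    and other: "\<And>c c'. c \<in> C \<Longrightarrow> c' \<in> C \<Longrightarrow> c \<noteq> c' \<Longrightarrow> Wset W c' (D c) \<le> l2"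
  shows "\<exists>u E. DI_code M W n (card C) l1 l2 u E"
proof -
  obtain cs where cs: "set cs = C" "distinct cs"
    using finite_distinct_list[OF \<open>finite C\<close>] by blast
  have mem: "cs ! j \<in> C" if "j < length cs" for j
    using cs(1) that by auto
  have "DI_code M W n (length cs) l1 l2 (\<lambda>j. cs ! j) (\<lambda>j. D (cs ! j))"
    unfolding DI_code_def using own[OF mem] other[OF mem mem] cs(2) by (auto simp: nth_eq_iff_index_eq)
  moreover have "length cs = card C"
    using distinct_card[OF cs(2)] cs(1) by simp
  ultimately show ?thesis
    by auto
qed

text \<open>Codewords whose own mean log-likelihoods lie in a common bin of width \<open>t\<close>: the divergence gap
  between the means under different codewords then transfers to the decoder's own threshold.\<close>

lemma DI_code_of_words:
  fixes W :: "'a \<Rightarrow> 'b::finite \<Rightarrow> real"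
  assumes ch: "channel M W" and A: "separated_inputs M W d A" and "0 < d"
    and e: "0 < e" "e \<le> 1" "4 * CARD('b) * sqrt e \<le> d\<^sup>2"
    and C: "finite C" "C \<subseteq> words A n" "\<And>u v. u \<in> C \<Longrightarrow> v \<in> C \<Longrightarrow> u \<noteq> v \<Longrightarrow> k \<le> hamming_dist u v"
    and t: "8 * t = k * d\<^sup>2" "0 < t"
    and bin: "\<And>u v. u \<in> C \<Longrightarrow> v \<in> C \<Longrightarrow> \<bar>mean_loglik e W u u - mean_loglik e W v v\<bar> < t"
    and err: "n * (ln e)\<^sup>2 / t\<^sup>2 \<le> l1" "n * (ln e)\<^sup>2 / t\<^sup>2 \<le> l2"
  shows "\<exists>u E. DI_code M W n (card C) l1 l2 u E"
proof (rule DI_code_of_set[OF C(1),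
      where D = "\<lambda>u. {ys. length ys = n \<and> mean_loglik e W u u - 2 * t \<le> loglik e W u ys}"])
  have word: "length u = n" "set u \<subseteq> space M" if "u \<in> C" for u
  proof -
    have "length u = n" "set u \<subseteq> A"
      using C(2) that unfolding words_def by auto
    then show "length u = n" "set u \<subseteq> space M"
      using A unfolding separated_inputs_def by auto
  qed
  show "length u = n \<and> set u \<subseteq> space M \<and>
      {ys. length ys = n \<and> mean_loglik e W u u - 2 * t \<le> loglik e W u ys} \<subseteq> {ys. length ys = n} \<and>
      1 - l1 \<le> Wset W u {ys. length ys = n \<and> mean_loglik e W u u - 2 * t \<le> loglik e W u ys}"
    if "u \<in> C" for u
    using word[OF that] Wset_decoding_set_ge[OF ch word(2)[OF that] word(1)[OF that] e(1,2) t(2)] err(1)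
    by auto
  show "Wset W v {ys. length ys = n \<and> mean_loglik e W u u - 2 * t \<le> loglik e W u ys} \<le> l2"
    if "u \<in> C" "v \<in> C" "u \<noteq> v" for u v
  proof -
    have "4 * t \<le> d\<^sup>2 / 2 * hamming_dist u v"
      using C(3)[OF that] t(1) \<open>0 < d\<close> by (simp add: field_simps)
    also have "\<dots> \<le> mean_loglik e W v v - mean_loglik e W u v"
      using that C(2) by (intro mean_loglik_gap[OF ch A \<open>0 < d\<close> _ _ e(1,3)]) auto
    finally have "mean_loglik e W u v + 3 * t \<le> mean_loglik e W u u"
      using bin[OF that(1,2)] by linarith
    then show ?thesis
      using Wset_decoding_set_le[OF ch word(2,1)[OF that(1)] word(2,1)[OF that(2)] e(1,2) t(2)] err(2)
      by linarith
  qed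
qed

section \<open>The achievability bound\<close>

lemma exists_binned_code:
  fixes W :: "'a \<Rightarrow> 'b::finite \<Rightarrow> real"
  assumes ch: "channel M W" and A: "separated_inputs M W d A" "A \<noteq> {}"
    and e: "0 < e" "e \<le> 1" and k: "1 \<le> k" and "0 < t"
  obtains C where "C \<subseteq> words A n" "\<And>u v. u \<in> C \<Longrightarrow> v \<in> C \<Longrightarrow> u \<noteq> v \<Longrightarrow> k \<le> hamming_dist u v"
    "\<And>u v. u \<in> C \<Longrightarrow> v \<in> C \<Longrightarrow> \<bar>mean_loglik e W u u - mean_loglik e W v v\<bar> < t"
    "real (card A) ^ n \<le> (n * - ln e / t + 1) * card C * 2 ^ n * real (card A) ^ k"
proof -
  have finA: "finite A"
    using A(1) by (simp add: separated_inputs_def)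
  obtain C0 where C0: "C0 \<subseteq> words A n" "\<And>u v. u \<in> C0 \<Longrightarrow> v \<in> C0 \<Longrightarrow> u \<noteq> v \<Longrightarrow> k \<le> hamming_dist u v"
    "card A ^ n \<le> card C0 * (2 ^ n * card A ^ k)"
    by (rule gilbert_varshamov[OF finA A(2) k]) blast
  have range: "0 \<le> - mean_loglik e W u u \<and> - mean_loglik e W u u \<le> n * - ln e" if "u \<in> C0" for u
  proof -
    have "length u = n" "set u \<subseteq> A"
      using C0(1) that unfolding words_def by auto
    then show ?thesis
      using mean_loglik_bounds[OF ch _ _ _ e, of u u] A(1) unfolding separated_inputs_def by auto
  qed
  obtain C where C: "C \<subseteq> C0" "card C0 \<le> (nat \<lfloor>n * - ln e / t\<rfloor> + 1) * card C"
    "\<And>u v. u \<in> C \<Longrightarrow> v \<in> C \<Longrightarrow> \<bar>- mean_loglik e W u u - - mean_loglik e W v v\<bar> < t"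
    using exists_large_bin[where g = "\<lambda>u. - mean_loglik e W u u" and B = "n * - ln e",
        OF finite_subset[OF C0(1) finite_words[OF finA]] \<open>0 < t\<close> range]
    by blast
  have "0 \<le> n * - ln e / t"
    using e \<open>0 < t\<close> by (intro divide_nonneg_pos mult_nonneg_nonneg) simp_all
  then have bins: "real (nat \<lfloor>n * - ln e / t\<rfloor>) + 1 \<le> n * - ln e / t + 1"
    by (simp add: of_nat_nat)
  have "real (card A) ^ n \<le> card C0 * 2 ^ n * real (card A) ^ k"
    using C0(3) by (simp flip: of_nat_power of_nat_mult add: of_nat_le_iff[symmetric] mult.assoc)
  also have "\<dots> \<le> (real (nat \<lfloor>n * - ln e / t\<rfloor>) + 1) * card C * 2 ^ n * real (card A) ^ k"
  proof -
    have "real (card C0) \<le> (real (nat \<lfloor>n * - ln e / t\<rfloor>) + 1) * card C"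
      using of_nat_mono[OF C(2), where 'a = real] by (simp add: distrib_right)
    then show ?thesis
      by (intro mult_right_mono) simp_all
  qed
  also have "\<dots> \<le> (n * - ln e / t + 1) * card C * 2 ^ n * real (card A) ^ k"
    using bins by (intro mult_right_mono) simp_all
  finally show ?thesis
    using C0 C by (intro that) (auto simp: abs_minus_commute)
qed

lemma DI_code_from_separated_inputs:
  fixes W :: "'a \<Rightarrow> 'b::finite \<Rightarrow> real"
  assumes ch: "channel M W" and A: "separated_inputs M W d A" "A \<noteq> {}" and "0 < d"
    and e: "0 < e" "e \<le> 1" "4 * CARD('b) * sqrt e \<le> d\<^sup>2" and k: "1 \<le> k"
    and err: "64 * real n * (ln e)\<^sup>2 / ((real k)\<^sup>2 * d ^ 4) \<le> l1" "64 * real n * (ln e)\<^sup>2 / ((real k)\<^sup>2 * d ^ 4) \<le> l2"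
  shows "\<exists>N u E. DI_code M W n N l1 l2 u E \<and>
    real (card A) ^ n \<le> (8 * real n * - ln e / (real k * d\<^sup>2) + 1) * N * 2 ^ n * real (card A) ^ k"
proof -
  define t where "t = k * d\<^sup>2 / 8"
  have t: "8 * t = k * d\<^sup>2" "0 < t"
    using k \<open>0 < d\<close> by (auto simp: t_def)
  obtain C where C: "C \<subseteq> words A n" "\<And>u v. u \<in> C \<Longrightarrow> v \<in> C \<Longrightarrow> u \<noteq> v \<Longrightarrow> k \<le> hamming_dist u v"
    "\<And>u v. u \<in> C \<Longrightarrow> v \<in> C \<Longrightarrow> \<bar>mean_loglik e W u u - mean_loglik e W v v\<bar> < t"
    and size: "real (card A) ^ n \<le> (n * - ln e / t + 1) * card C * 2 ^ n * real (card A) ^ k"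
    by (rule exists_binned_code[OF ch A e(1,2) k t(2)]) blast
  have "finite C"
    using C(1) finite_words A(1) finite_subset unfolding separated_inputs_def by blast
  moreover have "n * (ln e)\<^sup>2 / t\<^sup>2 = 64 * real n * (ln e)\<^sup>2 / ((real k)\<^sup>2 * d ^ 4)"
    unfolding t_def by (simp add: power_divide power_mult_distrib flip: power_mult)
  ultimately have "\<exists>u E. DI_code M W n (card C) l1 l2 u E"
    using err by (intro DI_code_of_words[OF ch A(1) \<open>0 < d\<close> e _ C(1,2) t C(3)]) simp_all
  then obtain u E where "DI_code M W n (card C) l1 l2 u E"
    by blast
  moreover have "n * - ln e / t = 8 * real n * - ln e / (real k * d\<^sup>2)"
    by (simp add: t_def)
  ultimately show ?thesis
    using size by auto
qed

lemma log_code_size_ge: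
  fixes m N b G :: real and q k :: nat
  assumes G: "1 \<le> G" "G \<le> m" and "0 \<le> N" and b: "0 < b" "b \<le> k" and "1 \<le> q"
    and size: "m ^ (q * k) \<le> b * N * 2 ^ (q * k) * m ^ k"
  shows "0 < N" and "k * ((real q - 1) * log 2 G - q - 1) \<le> log 2 N"
proof -
  have m: "1 \<le> m"
    using G by linarith
  have "0 < m ^ (q * k)"
    using m by simp
  then show N: "0 < N"
    using size \<open>0 \<le> N\<close> by (cases "N = 0") auto
  have "q * k * log 2 m = log 2 (m ^ (q * k))"
    using m by (simp add: log_nat_power)
  also have "\<dots> \<le> log 2 (b * N * 2 ^ (q * k) * m ^ k)"
    using size m N b by (subst log_le_cancel_iff) auto
  also have "\<dots> = log 2 b + log 2 N + q * k + k * log 2 m"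
    using m N b by (simp add: log_mult log_nat_power)
  finally have "q * k * log 2 m \<le> log 2 b + log 2 N + q * k + k * log 2 m" .
  moreover have "log 2 b \<le> k"
  proof -
    have "real k \<le> real (2 ^ k)"
      using less_exp[of k] by (simp only: of_nat_le_iff less_imp_le)
    then have "real k \<le> 2 ^ k"
      by simp
    then have "b \<le> 2 ^ k"
      using b(2) by linarith
    then show ?thesis
      using b(1) log_le_cancel_iff[of 2 b "2 ^ k"] by (simp add: log_nat_power)
  qed
  moreover have "k * ((real q - 1) * log 2 m - q - 1) = q * k * log 2 m - q * k - k * log 2 m - k"
    by (simp add: algebra_simps)
  moreover have "k * ((real q - 1) * log 2 G - q - 1) \<le> k * ((real q - 1) * log 2 m - q - 1)"
    using G \<open>1 \<le> q\<close> by (intro mult_left_mono diff_right_mono mult_left_mono) auto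
  ultimately show "k * ((real q - 1) * log 2 G - q - 1) \<le> log 2 N"
    by linarith
qed

lemma truncation_level_bounds:
  fixes \<delta> Y :: real
  assumes \<delta>: "0 < \<delta>" "\<delta> \<le> 1" and Y: "1 \<le> Y"
  defines "e \<equiv> (\<delta>\<^sup>2 / (4 * Y))\<^sup>2"
  shows "0 < e" "e \<le> 1" "4 * Y * sqrt e = \<delta>\<^sup>2"
    and "- ln e = 2 * ln (4 * Y) - 4 * ln \<delta>" "1 \<le> - ln e"
proof -
  have "\<delta>\<^sup>2 \<le> 1"
    using \<delta> by (simp add: power_le_one)
  then have "\<delta>\<^sup>2 / (4 * Y) \<le> 1"
    using Y by (simp add: divide_le_eq)
  then show "0 < e" "e \<le> 1" "4 * Y * sqrt e = \<delta>\<^sup>2"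
    using \<delta>(1) Y unfolding e_def by (simp_all add: power_le_one)
  show ln_e: "- ln e = 2 * ln (4 * Y) - 4 * ln \<delta>"
    unfolding e_def using \<delta>(1) Y by (simp add: ln_realpow ln_div)
  have "1 \<le> ln (4 * Y)"
    using exp_le Y by (subst ln_ge_iff) auto
  moreover have "ln \<delta> \<le> 0"
    using \<delta> by simp
  ultimately show "1 \<le> - ln e"
    unfolding ln_e by linarith
qed

lemma block_ratio_bounds:
  fixes \<delta> lam L :: real and q :: nat
  assumes \<delta>: "0 < \<delta>" "\<delta> \<le> 1" and lam: "0 < lam" "lam \<le> 1" and L: "1 \<le> L" and q: "1 \<le> q"
  shows "1 / \<delta>\<^sup>2 \<le> q * L / \<delta>\<^sup>2" "1 \<le> q * L / \<delta>\<^sup>2"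
    and "9 * (q * L / \<delta>\<^sup>2) \<le> 64 * real q * L\<^sup>2 / (lam * \<delta> ^ 4)"
proof -
  define p where "p = 1 / \<delta>\<^sup>2"
  have p: "1 \<le> p" "\<delta> ^ 4 = 1 / p\<^sup>2"
    unfolding p_def using \<delta> by (simp_all add: power_le_one power_one_over flip: power_mult)
  have eq: "q * L / \<delta>\<^sup>2 = q * L * p" "64 * real q * L\<^sup>2 / (lam * \<delta> ^ 4) = 64 * (q * L\<^sup>2 * p\<^sup>2 / lam)"
    unfolding p(2) by (simp_all add: p_def)
  have qL: "1 \<le> q * L"
    using q L by (intro mult_ge1_I) simp_all
  then show "1 / \<delta>\<^sup>2 \<le> q * L / \<delta>\<^sup>2" "1 \<le> q * L / \<delta>\<^sup>2"
    using p(1) unfolding eq(1) p_def[symmetric] by (simp_all add: mult_le_cancel_right1 mult_ge1_I)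
  have "q * L * p \<le> q * L\<^sup>2 * p\<^sup>2"
    using q L p(1) by (simp add: power2_eq_square mult_mono)
  also have "\<dots> \<le> q * L\<^sup>2 * p\<^sup>2 / lam"
  proof -
    have "q * L\<^sup>2 * p\<^sup>2 * lam \<le> q * L\<^sup>2 * p\<^sup>2"
      by (rule mult_left_le) (use lam in simp_all)
    then show ?thesis
      by (simp only: pos_le_divide_eq[OF lam(1)])
  qed
  finally show "9 * (q * L / \<delta>\<^sup>2) \<le> 64 * real q * L\<^sup>2 / (lam * \<delta> ^ 4)"
    unfolding eq using qL p(1) \<open>1 \<le> q * L / \<delta>\<^sup>2\<close>[unfolded eq(1)] by linarith
qed

lemma block_length_bounds:
  fixes \<delta> lam L :: real and q :: nat
  assumes \<delta>: "0 < \<delta>" "\<delta> \<le> 1" and lam: "0 < lam" "lam \<le> 1" and L: "1 \<le> L" and q: "1 \<le> q"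
  defines "k \<equiv> nat \<lceil>64 * real q * L\<^sup>2 / (lam * \<delta> ^ 4)\<rceil>"
  shows "1 / \<delta>\<^sup>2 \<le> k" and "8 * real q * L / \<delta>\<^sup>2 + 1 \<le> k"
    and "64 * real (q * k) * L\<^sup>2 / ((real k)\<^sup>2 * \<delta> ^ 4) \<le> lam"
    and "log 2 (q * k) \<le> log 2 (128 * (real q)\<^sup>2 / lam) + 2 * log 2 L - 4 * log 2 \<delta>"
proof -
  define \<kappa> where "\<kappa> = 64 * real q * L\<^sup>2 / (lam * \<delta> ^ 4)"
  define x where "x = real q * L / \<delta>\<^sup>2"
  note ratio = block_ratio_bounds[OF assms(1-6), folded \<kappa>_def x_def]
  have k: "\<kappa> \<le> k" "k \<le> \<kappa> + 1"
    using ratio unfolding k_def \<kappa>_def[symmetric] by (auto simp: of_nat_nat)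
  have "9 * x \<le> k"
    using ratio(3) k(1) by (rule order_trans)
  then show "1 / \<delta>\<^sup>2 \<le> k"
    using ratio(1,2) by linarith
  have "8 * real q * L / \<delta>\<^sup>2 + 1 = 8 * x + 1"
    by (simp add: x_def)
  also have "\<dots> \<le> k"
    using ratio(2) \<open>9 * x \<le> k\<close> by linarith
  finally show "8 * real q * L / \<delta>\<^sup>2 + 1 \<le> k" .
  have kpos: "0 < real k"
    using ratio(2) \<open>9 * x \<le> k\<close> by linarith
  have "64 * q * L\<^sup>2 \<le> k * (lam * \<delta> ^ 4)"
    using k(1) lam(1) \<delta>(1) unfolding \<kappa>_def by (simp add: pos_divide_le_eq)
  then have "64 * real (q * k) * L\<^sup>2 \<le> lam * ((real k)\<^sup>2 * \<delta> ^ 4)"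
    using kpos by (simp add: power2_eq_square mult_left_mono mult.assoc mult.left_commute)
  then show "64 * real (q * k) * L\<^sup>2 / ((real k)\<^sup>2 * \<delta> ^ 4) \<le> lam"
    using kpos \<delta>(1) by (simp add: pos_divide_le_eq)
  have "real (q * k) \<le> q * (2 * \<kappa>)"
    using k ratio by (simp add: mult_left_mono)
  also have "\<dots> = 128 * (real q)\<^sup>2 / lam * L\<^sup>2 / \<delta> ^ 4"
    unfolding \<kappa>_def using lam by (simp add: power2_eq_square field_simps)
  finally have "log 2 (q * k) \<le> log 2 (128 * (real q)\<^sup>2 / lam * L\<^sup>2 / \<delta> ^ 4)"
    using kpos q lam(1) L \<delta>(1) by (subst log_le_cancel_iff) auto
  also have "\<dots> = log 2 (128 * (real q)\<^sup>2 / lam) + 2 * log 2 L - 4 * log 2 \<delta>"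
    using lam q L \<delta>(1) by (simp add: log_mult log_divide log_nat_power)
  finally show "log 2 (q * k) \<le> log 2 (128 * (real q)\<^sup>2 / lam) + 2 * log 2 L - 4 * log 2 \<delta>" .
qed

lemma DI_code_at_scale:
  fixes W :: "'a \<Rightarrow> 'b::finite \<Rightarrow> real"
  assumes ch: "channel M W" and ne: "space M \<noteq> {}"
    and lam: "0 < lam" "lam \<le> 1" "lam \<le> l1" "lam \<le> l2" and q: "1 \<le> q" and \<delta>: "0 < \<delta>" "\<delta> \<le> 1"
  shows "\<exists>k N u E. DI_code M W (q * k) N l1 l2 u E \<and> 1 \<le> N \<and> 1 / \<delta>\<^sup>2 \<le> k \<and>
    log 2 (real (q * k)) \<le> log 2 (128 * (real q)\<^sup>2 / lam) + 2 * log 2 (2 * ln (4 * real CARD('b)) - 4 * ln \<delta>) - 4 * log 2 \<delta> \<and>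
    k * ((real q - 1) * log 2 (covering_number (sqrt_tilde M W) \<delta>) - q - 1) \<le> log 2 N"
proof -
  define Y where "Y = real CARD('b)"
  define e where "e = (\<delta>\<^sup>2 / (4 * Y))\<^sup>2"
  have "1 \<le> Y"
    unfolding Y_def by (simp add: Suc_le_eq)
  note e = truncation_level_bounds[OF \<delta> this, folded e_def]
  define k where "k = nat \<lceil>64 * real q * (- ln e)\<^sup>2 / (lam * \<delta> ^ 4)\<rceil>"
  note kb = block_length_bounds[OF \<delta> lam(1,2) e(5) q, folded k_def]
  have "1 \<le> 1 / \<delta>\<^sup>2"
    using \<delta> by (simp add: power_le_one)
  then have k: "1 \<le> k"
    using kb(1) by linarith
  obtain A where A: "separated_inputs M W \<delta> A" "covering_number (sqrt_tilde M W) \<delta> \<le> card A"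
    using exists_separated_inputs[OF ch \<delta>(1)] by blast
  have G: "1 \<le> covering_number (sqrt_tilde M W) \<delta>"
    using covering_number_sqrt_tilde_ge_1[OF ch ne \<delta>(1)] .
  then have A_ne: "A \<noteq> {}"
    using A(2) by auto
  have e3: "4 * CARD('b) * sqrt e \<le> \<delta>\<^sup>2"
    using e(3) by (simp add: Y_def)
  have err: "64 * real (q * k) * (ln e)\<^sup>2 / ((real k)\<^sup>2 * \<delta> ^ 4) \<le> lam"
    using kb(3) by simp
  have "\<exists>N u E. DI_code M W (q * k) N l1 l2 u E \<and> real (card A) ^ (q * k)
      \<le> (8 * real (q * k) * - ln e / (real k * \<delta>\<^sup>2) + 1) * N * 2 ^ (q * k) * real (card A) ^ k"
    by (intro DI_code_from_separated_inputs[OF ch A(1) A_ne \<delta>(1) e(1,2) e3 k]) (use err lam in linarith)+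
  then obtain N u E where code: "DI_code M W (q * k) N l1 l2 u E"
    and size: "real (card A) ^ (q * k)
      \<le> (8 * real (q * k) * - ln e / (real k * \<delta>\<^sup>2) + 1) * N * 2 ^ (q * k) * real (card A) ^ k"
    by blast
  have bins: "8 * real (q * k) * - ln e / (real k * \<delta>\<^sup>2) + 1 = 8 * real q * - ln e / \<delta>\<^sup>2 + 1"
    using k by simp
  have bins_pos: "0 < 8 * real q * - ln e / \<delta>\<^sup>2 + 1"
    using e(5) \<delta>(1) by (intro add_nonneg_pos divide_nonneg_pos mult_nonneg_nonneg) simp_all
  have "1 \<le> real (covering_number (sqrt_tilde M W) \<delta>)" "real (covering_number (sqrt_tilde M W) \<delta>) \<le> card A"
    using G A(2) by simp_all
  note bound = log_code_size_ge[OF this _ bins_pos kb(2) q size[unfolded bins]]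
  have "0 < real N" "k * ((real q - 1) * log 2 (covering_number (sqrt_tilde M W) \<delta>) - q - 1) \<le> log 2 N"
    using bound by simp_all
  moreover have "log 2 (q * k)
      \<le> log 2 (128 * (real q)\<^sup>2 / lam) + 2 * log 2 (2 * ln (4 * real CARD('b)) - 4 * ln \<delta>) - 4 * log 2 \<delta>"
    using kb(4) unfolding e(4) Y_def .
  ultimately show ?thesis
    using code kb(1) by (intro exI[of _ k] exI[of _ N]) auto
qed

lemma normalized_log_size_ge:
  fixes X Z :: real and q k N :: nat
  assumes n: "2 \<le> q * k" and "1 \<le> k" "1 \<le> N"
    and log_n: "log 2 (q * k) \<le> Z" and size: "k * X \<le> log 2 N"
  shows "X / (q * Z) \<le> log 2 N / (real (q * k) * log 2 (real (q * k)))"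
proof -
  have "2 \<le> real (q * k)"
    using n by linarith
  then have log_n1: "1 \<le> log 2 (real (q * k))"
    by simp
  have "0 < Z"
    using log_n log_n1 by linarith
  moreover have "0 < q * k"
    using n by linarith
  ultimately have pos: "0 < real q" "0 < real (q * k)" "0 < Z"
    by simp_all
  show ?thesis
  proof (cases "X \<le> 0")
    case True
    then have "X / (q * Z) \<le> 0"
      using pos by (intro divide_nonpos_pos) auto
    also have "0 \<le> log 2 N / (real (q * k) * log 2 (real (q * k)))"
      using \<open>1 \<le> N\<close> log_n1 by simp
    finally show ?thesis .
  next
    case False
    then have "0 \<le> log 2 N"
      using size \<open>1 \<le> k\<close> mult_pos_pos[of "real k" X] by linarith
    have "X / (q * Z) = k * X / (real (q * k) * Z)"
      using \<open>1 \<le> k\<close> by simp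
    also have "\<dots> \<le> log 2 N / (real (q * k) * Z)"
      using size pos by (intro divide_right_mono) auto
    also have "\<dots> \<le> log 2 N / (real (q * k) * log 2 (real (q * k)))"
    proof (rule divide_left_mono)
      show "real (q * k) * log 2 (real (q * k)) \<le> real (q * k) * Z"
        using log_n pos(2) by (intro mult_left_mono) auto
      show "0 < real (q * k) * Z * (real (q * k) * log 2 (real (q * k)))"
        using pos(2,3) log_n1 by (intro mult_pos_pos) auto
    qed fact
    finally show ?thesis .
  qed
qed

lemma DI_rate_ge_at_scale:
  fixes W :: "'a \<Rightarrow> 'b::finite \<Rightarrow> real"
  assumes ch: "channel M W" and ne: "space M \<noteq> {}"
    and lam: "0 < lam" "lam \<le> 1" "lam \<le> l1" "lam \<le> l2" and q: "2 \<le> q" and \<delta>: "0 < \<delta>" "\<delta> \<le> 1"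
    and dim: "s * - log 2 \<delta> \<le> log 2 (covering_number (sqrt_tilde M W) \<delta>)"
  defines "Z \<equiv> log 2 (128 * (real q)\<^sup>2 / lam) + 2 * log 2 (2 * ln (4 * real CARD('b)) - 4 * ln \<delta>) - 4 * log 2 \<delta>"
  shows "\<exists>n. 1 / \<delta>\<^sup>2 \<le> n \<and> ereal (((real q - 1) * s * - log 2 \<delta> - q - 1) / (q * Z)) \<le> DI_rate M W n l1 l2"
proof -
  let ?X = "(real q - 1) * log 2 (covering_number (sqrt_tilde M W) \<delta>) - q - 1"
  obtain k N u E where code: "DI_code M W (q * k) N l1 l2 u E" and N: "1 \<le> N" and k: "1 / \<delta>\<^sup>2 \<le> k"
    and log_n: "log 2 (real (q * k)) \<le> Z" and size: "k * ?X \<le> log 2 N"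
    using DI_code_at_scale[OF ch ne lam _ \<delta>, of q] q unfolding Z_def by auto
  have "1 \<le> 1 / \<delta>\<^sup>2"
    using \<delta> by (simp add: power_le_one)
  then have k1: "1 \<le> k"
    using k by linarith
  have "k \<le> q * k"
    using mult_le_mono1[of 1 q k] q by simp
  then have n: "2 \<le> q * k" "1 / \<delta>\<^sup>2 \<le> real (q * k)"
    using mult_le_mono[OF q k1] k of_nat_mono[of k "q * k", where 'a = real] by auto
  then have "2 \<le> real (q * k)"
    by linarith
  then have "1 \<le> log 2 (real (q * k))"
    by simp
  then have "0 < q * Z"
    using log_n q by simp
  moreover have "(real q - 1) * s * - log 2 \<delta> \<le> (real q - 1) * log 2 (covering_number (sqrt_tilde M W) \<delta>)"
    using mult_left_mono[OF dim, of "real q - 1"] q by (simp add: mult.assoc)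
  ultimately have "((real q - 1) * s * - log 2 \<delta> - q - 1) / (q * Z) \<le> ?X / (q * Z)"
    by (intro divide_right_mono) auto
  also have "\<dots> \<le> log 2 N / (real (q * k) * log 2 (real (q * k)))"
    by (rule normalized_log_size_ge[OF n(1) k1 N log_n size])
  finally have "ereal (((real q - 1) * s * - log 2 \<delta> - q - 1) / (q * Z))
      \<le> ereal (log 2 N / (real (q * k) * log 2 (real (q * k))))"
    by simp
  also have "\<dots> \<le> DI_rate M W (q * k) l1 l2"
    by (rule DI_rate_ge_code_size[OF code n(1) N])
  finally show ?thesis
    using n(2) by blast
qed

lemma eventually_scale_bound_gt:
  fixes a b s r :: real and q :: nat
  assumes "2 \<le> q" "4 * q * r < s"
  shows "\<forall>\<^sub>F \<delta> in at_right 0. r < (s * - log 2 \<delta> - q - 1) / (q * (a + 2 * log 2 (b - 4 * ln \<delta>) - 4 * log 2 \<delta>))"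
proof -
  have "((\<lambda>\<delta>. (s * - log 2 \<delta> - q - 1) / (q * (a + 2 * log 2 (b - 4 * ln \<delta>) - 4 * log 2 \<delta>)))
      \<longlongrightarrow> s / (4 * q)) (at_right 0)"
    using assms(1) by (real_asymp simp: field_simps)
  moreover have "r < s / (4 * q)"
    using assms by (simp add: field_simps)
  ultimately show ?thesis
    by (rule order_tendstoD(1))
qed

lemma limsup_DI_rate_ge_quarter_dim:
  fixes W :: "'a \<Rightarrow> 'b::finite \<Rightarrow> real"
  assumes ch: "channel M W" and ne: "space M \<noteq> {}" and l: "0 < l1" "0 < l2"
  shows "ereal (1/4) * upper_minkowski_dim (sqrt_tilde M W) \<le> limsup (\<lambda>n. DI_rate M W n l1 l2)"
proof (rule ereal_mult_le_of_lt)
  let ?G = "\<lambda>\<delta>. log 2 (real (covering_number (sqrt_tilde M W) \<delta>))"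
  define lam where "lam = min (min l1 l2) 1"
  have lam: "0 < lam" "lam \<le> 1" "lam \<le> l1" "lam \<le> l2"
    using l by (auto simp: lam_def)
  fix r
  assume "ereal r < upper_minkowski_dim (sqrt_tilde M W)"
  then obtain r' where "ereal r < ereal r'" and "ereal r' < upper_minkowski_dim (sqrt_tilde M W)"
    using ereal_dense2 by blast
  then have "r < r'" and freq: "\<exists>\<^sub>F \<delta> in at_right 0. r' < ?G \<delta> / - log 2 \<delta>"
    unfolding upper_minkowski_dim_def by (auto dest: less_Limsup_imp_frequently)
  obtain n0 :: nat where "r' / (r' - r) < n0"
    using reals_Archimedean2 by blast
  define q where "q = max n0 2"
  have "r' < n0 * (r' - r)"
    using \<open>r' / (r' - r) < n0\<close> \<open>r < r'\<close> by (simp add: divide_less_eq)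
  also have "\<dots> \<le> q * (r' - r)"
    using \<open>r < r'\<close> by (intro mult_right_mono) (auto simp: q_def)
  finally have q: "2 \<le> q" "r' < q * (r' - r)"
    by (auto simp: q_def)
  let ?Z = "\<lambda>\<delta>. log 2 (128 * (real q)\<^sup>2 / lam) + 2 * log 2 (2 * ln (4 * real CARD('b)) - 4 * ln \<delta>) - 4 * log 2 \<delta>"
  have "4 * q * (r / 4) < (real q - 1) * r'"
    using q(2) by (simp add: algebra_simps)
  note scale = eventually_scale_bound_gt[OF q(1) this,
      where a = "log 2 (128 * (real q)\<^sup>2 / lam)" and b = "2 * ln (4 * real CARD('b))"]
  show "ereal (1/4 * r) \<le> limsup (\<lambda>n. DI_rate M W n l1 l2)"
  proof (rule frequently_le_imp_le_Limsup, unfold frequently_sequentially, intro allI)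
    fix n0 :: nat
    have "\<forall>\<^sub>F \<delta> in at_right 0. 0 < \<delta> \<and> \<delta> < 1 \<and> real n0 \<le> 1 / \<delta>\<^sup>2"
      by (intro eventually_conj; real_asymp)
    with scale have "\<forall>\<^sub>F \<delta> in at_right 0. r / 4 < ((real q - 1) * r' * - log 2 \<delta> - q - 1) / (q * ?Z \<delta>)
        \<and> 0 < \<delta> \<and> \<delta> < 1 \<and> real n0 \<le> 1 / \<delta>\<^sup>2"
      by (rule eventually_conj)
    from frequently_ex[OF frequently_eventually_conj[OF freq this]] obtain \<delta>
      where \<delta>: "0 < \<delta>" "\<delta> < 1" "real n0 \<le> 1 / \<delta>\<^sup>2" and dim: "r' < ?G \<delta> / - log 2 \<delta>"
        and bound: "r / 4 < ((real q - 1) * r' * - log 2 \<delta> - q - 1) / (q * ?Z \<delta>)"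
      by blast
    have "0 < - log 2 \<delta>"
      using \<delta> by simp
    then have "r' * - log 2 \<delta> \<le> ?G \<delta>"
      using dim by (simp only: pos_less_divide_eq less_imp_le)
    then obtain n where "1 / \<delta>\<^sup>2 \<le> n" and rate: "ereal (((real q - 1) * r' * - log 2 \<delta> - q - 1) / (q * ?Z \<delta>))
        \<le> DI_rate M W n l1 l2"
      using DI_rate_ge_at_scale[OF ch ne lam q(1) \<delta>(1) less_imp_le[OF \<delta>(2)]] by blast
    then have "n0 \<le> n" "ereal (1/4 * r) \<le> DI_rate M W n l1 l2"
      using \<delta>(3) bound by (auto intro: order_trans[OF _ rate])
    then show "\<exists>n\<ge>n0. ereal (1/4 * r) \<le> DI_rate M W n l1 l2"
      by blast
  qed
qed simp

theorem theorem7: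
  fixes M :: "'a measure" and W :: "'a \<Rightarrow> 'b::finite \<Rightarrow> real" and l1 l2 :: real
  assumes "channel M W"
    and "space M \<noteq> {}"
    and "0 < l1" and "0 < l2" and "l1 + l2 < 1"
  shows "ereal (1/4) * upper_minkowski_dim (sqrt_tilde M W) \<le> C_opt_DI M W
    \<and> C_opt_DI M W \<le> limsup (\<lambda>n. DI_rate M W n l1 l2)
    \<and> limsup (\<lambda>n. DI_rate M W n l1 l2) \<le> ereal (1/2) * upper_minkowski_dim (sqrt_tilde M W)"
proof (intro conjI)
  show "ereal (1/4) * upper_minkowski_dim (sqrt_tilde M W) \<le> C_opt_DI M W"
    unfolding C_opt_DI_def using limsup_DI_rate_ge_quarter_dim[OF assms(1,2)] by (auto intro!: INF_greatest)
  have "C_opt_DI M W \<le> (INF l2\<in>{0<..}. limsup (\<lambda>n. DI_rate M W n l1 l2))"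
    unfolding C_opt_DI_def using assms(3) by (intro INF_lower) simp
  also have "\<dots> \<le> limsup (\<lambda>n. DI_rate M W n l1 l2)"
    using assms(4) by (intro INF_lower) simp
  finally show "C_opt_DI M W \<le> limsup (\<lambda>n. DI_rate M W n l1 l2)" .
  show "limsup (\<lambda>n. DI_rate M W n l1 l2) \<le> ereal (1/2) * upper_minkowski_dim (sqrt_tilde M W)"
    by (rule limsup_DI_rate_le_half_dim[OF assms])
qed

end
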